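(* Let $M$ and $M'$ be lists of integers, and let $\lambda$, $n$ and $m\ge3$ be positive integers. Suppose there is an $(M)$-packing of $\lambda K_n$ whose leave has an $(M',m,2)$-flower as its only nontrivial connected component. Then there is an $(M,3)$-packing of $\lambda K_n$ whose leave has an $(M',m-1)$-flower as its only nontrivial connected component.
   Context: Graphs may have multiple edges but no loops. $\lambda K_n$ is the complete multigraph on $n$ vertices with $\lambda$ edges joining each pair of distinct vertices. For $m\ge 2$, an $m$-cycle is a cycle with $m$ edges; a $2$-cycle consists of two parallel edges. A list is a finite multiset of integers. $(M,M')$ denotes the concatenation (multiset union) of lists $M$ and $M'$, and $(M,a,b)$ denotes $M$ with entries $a,b$ appended. Let $K$ be a graph and let $M=(m_1,\dots,m_t)$ be a list with every $m_i\ge 2$. If every vertex of $K$ has even degree, an $(M)$-decomposition of $K$ is a decomposition $\{G_1,\dots,G_t\}$ of $K$ in which $G_i$ is an $m_i$-cycle for each $i$. If every vertex of $K$ has odd degree, an $(M)$-decomposition of $K$ is a decomposition $\{G_1,\dots,G_t,I\}$ of $K$ in which $G_i$ is an $m_i$-cycle for each $i$ and $I$ is a perfect matching. An $(M)$-packing of $\lambda K_n$ is an $(M)$-decomposition of a subgraph $G$ of $\lambda K_n$, where $G$ has all degrees even if $\lambda(n-1)$ is even and all degrees odd if $\lambda(n-1)$ is odd. Its leave is $\lambda K_n-G$, i.e. the graph on the same vertex set whose edges are those of $\lambda K_n$ not in $G$. A connected component is nontrivial if it has at least one edge. For integers $a_1,\dots,a_s\ge2$ with $s\ge1$, an $(a_1,\dots,a_s)$-flower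 is a graph that is the union of cycles $A_1,\dots,A_s$ such that $A_i$ has length $a_i$ for each $i$, and, if $s\ge2$, there is a vertex $x$ with $V(A_i)\cap V(A_j)=\{x\}$ for all $i\ne j$. *)

theory Defs
  imports Main "HOL-Library.Multiset"
begin

text \<open>Multigraphs on the vertex set {0..<n} are represented by multisets of edges;
an edge is a two-element set of vertices.\<close>

type_synonym mgraph = "nat set multiset"

definition edges_Kn :: "nat \<Rightarrow> nat set set" where
  "edges_Kn n = {e. \<exists>i j. i < j \<and> j < n \<and> e = {i, j}}"

definition lamKn :: "nat \<Rightarrow> nat \<Rightarrow> mgraph" where
  "lamKn lam n = (\<Sum>e\<in>edges_Kn n. replicate_mset lam e)"

definition deg :: "mgraph \<Rightarrow> nat \<Rightarrow> nat" where
  "deg G v = size (filter_mset (\<lambda>e. v \<in> e) G)"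

text \<open>The cycle through the distinct vertices vs (in this cyclic order);
for length 2 this gives two parallel edges.\<close>
definition cycle_edges :: "nat list \<Rightarrow> mgraph" where
  "cycle_edges vs = mset (map (\<lambda>i. {vs ! i, vs ! ((i + 1) mod length vs)}) [0..<length vs])"

definition is_cycle_list :: "nat list \<Rightarrow> bool" where
  "is_cycle_list vs \<longleftrightarrow> length vs \<ge> 2 \<and> distinct vs"

definition perfect_matching :: "nat \<Rightarrow> mgraph \<Rightarrow> bool" where
  "perfect_matching n I \<longleftrightarrow>
     (\<forall>e\<in>#I. \<exists>i j. i \<noteq> j \<and> i < n \<and> j < n \<and> e = {i, j}) \<and> (\<forall>v<n. deg I v = 1)"

definition M_decomposition :: "nat \<Rightarrow> int multiset \<Rightarrow> mgraph \<Rightarrow> bool" where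
  "M_decomposition n M K \<longleftrightarrow>
     ((\<forall>v<n. even (deg K v)) \<and>
        (\<exists>Cs. (\<forall>vs\<in>set Cs. is_cycle_list vs) \<and> mset (map (\<lambda>vs. int (length vs)) Cs) = M \<and>
              K = sum_list (map cycle_edges Cs)))
   \<or> ((\<forall>v<n. odd (deg K v)) \<and>
        (\<exists>Cs I. (\<forall>vs\<in>set Cs. is_cycle_list vs) \<and> mset (map (\<lambda>vs. int (length vs)) Cs) = M \<and>
              perfect_matching n I \<and> K = sum_list (map cycle_edges Cs) + I))"

definition packing_with_leave :: "nat \<Rightarrow> nat \<Rightarrow> int multiset \<Rightarrow> mgraph \<Rightarrow> bool" where
  "packing_with_leave lam n M L \<longleftrightarrow>
     (\<exists>G. G \<subseteq># lamKn lam n \<and> L = lamKn lam n - G \<and>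
          (if even (lam * (n - 1)) then (\<forall>v<n. even (deg G v)) else (\<forall>v<n. odd (deg G v))) \<and>
          M_decomposition n M G)"

definition is_flower :: "int multiset \<Rightarrow> mgraph \<Rightarrow> bool" where
  "is_flower A F \<longleftrightarrow>
     (\<exists>Cs. Cs \<noteq> [] \<and> (\<forall>vs\<in>set Cs. is_cycle_list vs) \<and>
           mset (map (\<lambda>vs. int (length vs)) Cs) = A \<and>
           F = sum_list (map cycle_edges Cs) \<and>
           (length Cs \<ge> 2 \<longrightarrow>
              (\<exists>x. \<forall>i<length Cs. \<forall>j<length Cs. i \<noteq> j \<longrightarrow> set (Cs ! i) \<inter> set (Cs ! j) = {x})))"

text \<open>"The leave L has F as its only nontrivial connected component", where F is
connected: the edge multiset of L is exactly that of F.\<close>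
definition leave_is_flower :: "int multiset \<Rightarrow> mgraph \<Rightarrow> bool" where
  "leave_is_flower A L \<longleftrightarrow> is_flower A L"

end

theory Submission
  imports Defs "HOL-Combinatorics.Transposition"
begin

text \<open>Write the $m$-cycle of the leave as $(x, a_1, a_2, a_3, \dots)$ and its $2$-cycle as $(x, y)$.
If $m = 3$, the $m$-cycle is simply moved into the packing. If $m \ge 4$, apply the
$(y, a_2)$-switch: transposing $y$ and $a_2$ in suitably chosen cycles of the packing (and in the
matching) changes the leave $L$ into $L - X + \pi(X)$, where $\pi$ is the transposition and $X$
consists of $\{x, y\}$ and one further leave edge with exactly one end in $\{y, a_2\}$.
Such an $X$ exists because $\lambda K_n$ is $\pi$-invariant: starting at the packing edge
$\pi(\{x, y\})$, pass alternately to the edge of the packing that must be switched together with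
the current one and to a further packing edge that is the $\pi$-image of the current one; by the
invariance this can only stop at the $\pi$-image of a second leave edge. In each of the three
possible outcomes the new leave splits into a $3$-cycle through $x$, which joins the packing,
and an $(m-1)$-cycle through $x$, which together with the remaining petals is the required
flower.\<close>

fun path_edges :: "nat list \<Rightarrow> mgraph" where
  "path_edges (a # b # r) = add_mset {a, b} (path_edges (b # r))"
| "path_edges _ = {#}"

lemma path_edges_append: "path_edges (xs @ y # ys) = path_edges (xs @ [y]) + path_edges (y # ys)"
proof (induction xs rule: path_edges.induct)
  case ("2_2" v)
  then show ?case by (cases ys) auto
qed auto

lemma path_edges_rev: "path_edges (rev xs) = path_edges xs"
proof (induction xs rule: path_edges.induct)
  case (1 a b r)
  have "path_edges (rev (a # b # r)) = path_edges (rev r @ b # [a])" by simp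
  also have "\<dots> = path_edges (rev r @ [b]) + path_edges [b, a]" by (rule path_edges_append)
  also have "\<dots> = path_edges (b # r) + {#{a,b}#}" using 1 by (simp add: insert_commute)
  finally show ?case by simp
qed auto

lemma path_edges_Cons_snoc:
  assumes "P \<noteq> []"
  shows "path_edges (a # P @ [b]) = add_mset {a, hd P} (add_mset {last P, b} (path_edges P))"
proof -
  obtain Q c where P: "P = Q @ [c]" using assms by (cases P rule: rev_cases) auto
  have "path_edges (a # Q @ [c, b]) = path_edges (a # Q @ [c]) + {#{c, b}#}"
    using path_edges_append[of "a # Q" c "[b]"] by simp
  moreover have "path_edges (a # Q @ [c]) = add_mset {a, hd P} (path_edges P)"
    by (cases Q) (simp_all add: P)
  ultimately show ?thesis by (simp add: P)
qed

lemma path_edges_subset: "e \<in># path_edges xs \<Longrightarrow> e \<subseteq> set xs"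
  by (induction xs rule: path_edges.induct) auto

lemma path_edges_conv_nth: "path_edges xs = mset (map (\<lambda>i. {xs ! i, xs ! (i + 1)}) [0..<length xs - 1])"
proof (induction xs rule: path_edges.induct)
  case (1 a b r)
  have "[0..<length (a # b # r) - 1] = 0 # map Suc [0..<length (b # r) - 1]"
    by (simp add: upt_conv_Cons map_Suc_upt del: upt_Suc)
  then show ?case using 1 by (simp add: comp_def)
qed auto

lemma cycle_edges_conv_path_edges:
  assumes "c \<noteq> []"
  shows "cycle_edges c = path_edges (c @ [hd c])"
proof -
  have "path_edges (c @ [hd c])
      = mset (map (\<lambda>i. {(c @ [hd c]) ! i, (c @ [hd c]) ! (i + 1)}) [0..<length c])"
    by (simp add: path_edges_conv_nth)
  also have "map (\<lambda>i. {(c @ [hd c]) ! i, (c @ [hd c]) ! (i + 1)}) [0..<length c]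
     = map (\<lambda>i. {c ! i, c ! ((i + 1) mod length c)}) [0..<length c]"
  proof (rule map_cong[OF refl])
    fix i assume "i \<in> set [0..<length c]"
    then show "{(c @ [hd c]) ! i, (c @ [hd c]) ! (i + 1)} = {c ! i, c ! ((i + 1) mod length c)}"
      using assms by (cases "i + 1 = length c") (auto simp: nth_append hd_conv_nth)
  qed
  finally show ?thesis by (simp add: cycle_edges_def)
qed

lemma cycle_edges_Cons: "cycle_edges (a # r) = path_edges (a # r @ [a])"
  by (simp add: cycle_edges_conv_path_edges)

lemma cycle_edges_rotate1: "cycle_edges (rotate1 c) = cycle_edges c"
proof (cases c)
  case (Cons a r)
  show ?thesis
  proof (cases r)
    case (Cons b r')
    have "cycle_edges (rotate1 c) = path_edges (b # r' @ [a] @ [b])"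
      using \<open>c = a # r\<close> Cons by (simp add: cycle_edges_Cons)
    also have "\<dots> = path_edges (b # r' @ [a]) + path_edges [a, b]"
      using path_edges_append[of "b # r'" a "[b]"] by simp
    finally show ?thesis using \<open>c = a # r\<close> Cons by (simp add: cycle_edges_Cons)
  qed (use Cons in simp)
qed simp

lemma cycle_edges_rotate: "cycle_edges (rotate n c) = cycle_edges c"
  by (induction n) (simp_all add: cycle_edges_rotate1)

lemma cycle_edges_append_Cons: "cycle_edges (xs @ y # ys) = cycle_edges (y # ys @ xs)"
  by (metis rotate_append cycle_edges_rotate append_Cons)

lemma cycle_edges_subset: "e \<in># cycle_edges c \<Longrightarrow> e \<subseteq> set c"
proof -
  assume "e \<in># cycle_edges c"
  then obtain i where i: "i < length c" and e: "e = {c ! i, c ! ((i + 1) mod length c)}"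
    by (auto simp: cycle_edges_def)
  have "(i + 1) mod length c < length c" using i by (intro mod_less_divisor) auto
  then show ?thesis using i e by (auto intro: nth_mem)
qed

lemma in_sum_list_cycle_edges: "e \<in># sum_list (map cycle_edges Cs) \<Longrightarrow> \<exists>c\<in>set Cs. e \<subseteq> set c"
  by (induction Cs) (auto dest: cycle_edges_subset)

lemma cycle_edges_pair: "cycle_edges [x, y] = {#{x,y},{x,y}#}"
  by (simp add: cycle_edges_def insert_commute)

lemma is_cycle_list_rotate_to:
  assumes "is_cycle_list c" "\<gamma> \<in> set c"
  obtains c' where "is_cycle_list c'" "length c' = length c" "cycle_edges c' = cycle_edges c"
    "set c' = set c" "c' = \<gamma> # tl c'"
proof -
  obtain xs ys where c: "c = xs @ \<gamma> # ys" using split_list[OF assms(2)] by blast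
  show thesis
    by (rule that[of "\<gamma> # ys @ xs"]) (use assms(1) c cycle_edges_append_Cons in \<open>auto simp: is_cycle_list_def\<close>)
qed

lemma deg_plus [simp]: "deg (A + B) v = deg A v + deg B v"
  by (simp add: deg_def)

lemma deg_add_mset [simp]: "deg (add_mset e A) v = (if v \<in> e then 1 else 0) + deg A v"
  by (simp add: deg_def)

lemma deg_empty [simp]: "deg {#} v = 0"
  by (simp add: deg_def)

lemma deg_path_edges:
  assumes "\<forall>i < length xs - 1. xs ! i \<noteq> xs ! (i + 1)" "xs \<noteq> []"
  shows "deg (path_edges xs) v + (if hd xs = v then 1 else 0) + (if last xs = v then 1 else 0)
    = 2 * count (mset xs) v"
  using assms
proof (induction xs rule: path_edges.induct)
  case (1 a b r)
  have "\<forall>i < length (b # r) - 1. (b # r) ! i \<noteq> (b # r) ! (i + 1)"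
  proof (intro allI impI)
    fix i assume "i < length (b # r) - 1"
    then show "(b # r) ! i \<noteq> (b # r) ! (i + 1)" using "1.prems"(1)[rule_format, of "Suc i"] by simp
  qed
  then show ?case using 1 "1.prems"(1)[rule_format, of 0] by auto
qed auto

lemma even_deg_cycle_edges:
  assumes "is_cycle_list c"
  shows "even (deg (cycle_edges c) v)"
proof -
  have d: "distinct c" and l: "length c \<ge> 2" using assms by (auto simp: is_cycle_list_def)
  let ?xs = "c @ [hd c]"
  have ne: "c \<noteq> []" using l by auto
  have "\<forall>i < length ?xs - 1. ?xs ! i \<noteq> ?xs ! (i + 1)"
  proof (intro allI impI)
    fix i assume i: "i < length ?xs - 1"
    show "?xs ! i \<noteq> ?xs ! (i + 1)"
    proof (cases "i + 1 = length c")
      case True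
      then have "c ! i \<noteq> c ! 0" using d l by (subst nth_eq_iff_index_eq) auto
      then show ?thesis using True ne by (auto simp: nth_append hd_conv_nth)
    next
      case False
      then show ?thesis using d i by (auto simp: nth_append nth_eq_iff_index_eq)
    qed
  qed
  from deg_path_edges[OF this] ne
  have "deg (path_edges ?xs) v + (if hd c = v then 1 else 0) + (if hd c = v then 1 else 0)
    = 2 * count (mset ?xs) v" by simp
  then have "even (deg (path_edges ?xs) v)" by presburger
  then show ?thesis using ne by (simp add: cycle_edges_conv_path_edges)
qed

lemma even_deg_cycles: "\<forall>c\<in>set Cs. is_cycle_list c \<Longrightarrow> even (deg (sum_list (map cycle_edges Cs)) v)"
  by (induction Cs) (auto simp: even_deg_cycle_edges)

lemma subseteq_image_mset_mset_set:
  assumes "finite N" "A \<subseteq># image_mset g (mset_set N)"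
  shows "\<exists>D\<subseteq>N. image_mset g (mset_set D) = A"
  using assms
proof (induction A arbitrary: N)
  case empty
  then show ?case by (intro exI[of _ "{}"]) auto
next
  case (add a A)
  have "a \<in># image_mset g (mset_set N)" using add.prems(2) by (meson mset_subset_eq_insertD)
  then obtain z where z: "z \<in> N" "g z = a" using add.prems(1) by auto
  have "mset_set N = add_mset z (mset_set (N - {z}))"
    using z add.prems(1) by (metis mset_set.remove)
  then have "A \<subseteq># image_mset g (mset_set (N - {z}))" using add.prems(2) z by simp
  then obtain D where D: "D \<subseteq> N - {z}" "image_mset g (mset_set D) = A"
    using add.IH[of "N - {z}"] add.prems(1) by auto
  have "finite D" "z \<notin> D" using D(1) add.prems(1) finite_subset by auto
  then have "mset_set (insert z D) = add_mset z (mset_set D)" by simp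
  then show ?case using D z by (intro exI[of _ "insert z D"]) auto
qed

lemma image_mset_mset_set_conv_sum: "finite A \<Longrightarrow> image_mset g (mset_set A) = (\<Sum>a\<in>A. {#g a#})"
  by (induction A rule: finite_induct) auto

lemma filter_mset_sum: "filter_mset P (\<Sum>a\<in>A. F a) = (\<Sum>a\<in>A. filter_mset P (F a))"
  by (induction A rule: infinite_finite_induct) auto

lemma image_mset_involution_add_pair:
  assumes "\<forall>l. fl (fl l) = l"
  shows "image_mset fl (add_mset u (add_mset (fl u) A)) = add_mset u (add_mset (fl u) A)
    \<longleftrightarrow> image_mset fl A = A"
  using assms by (simp add: add_mset_commute)

definition pairing_on :: "'a set \<Rightarrow> ('a \<Rightarrow> 'a) \<Rightarrow> bool" where
  "pairing_on N f \<longleftrightarrow> (\<forall>z\<in>N. f z \<in> N \<and> f (f z) = z \<and> f z \<noteq> z)"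

lemma pairing_on_shortcut:
  assumes f: "pairing_on N f" and N: "d \<in> N" "b \<in> N" and b: "b \<noteq> d" "b \<noteq> f d"
  shows "pairing_on (N - {f d, b}) (f(d := f b, f b := d))"
  unfolding pairing_on_def
proof
  define a c where "a = f d" and "c = f b"
  have fa: "f a = d" "a \<noteq> d" "a \<in> N" and fc: "f c = b" "c \<noteq> b" "c \<in> N"
    using f N by (auto simp: pairing_on_def a_def c_def)
  have ca: "c \<noteq> a" "c \<noteq> d" using fa fc b by (auto simp: a_def)
  fix z assume z: "z \<in> N - {f d, b}"
  let ?f' = "f(d := f b, f b := d)"
  consider "z = d" | "z = c" | "z \<noteq> c" "z \<noteq> d" by blast
  then show "?f' z \<in> N - {f d, b} \<and> ?f' (?f' z) = z \<and> ?f' z \<noteq> z"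
  proof cases
    case 3
    have fz: "f z \<in> N" "f (f z) = z" "f z \<noteq> z" using f z by (auto simp: pairing_on_def)
    have "f z \<noteq> a" using fz(2) fa(1) 3 by metis
    moreover have "f z \<noteq> b" using fz(2) 3 by (metis c_def)
    moreover have "f z \<noteq> c" using fz(2) fc(1) z by auto
    moreover have "f z \<noteq> d" using fz(2) z by (auto simp: a_def)
    ultimately show ?thesis using 3 fz by (auto simp: a_def[symmetric] c_def[symmetric])
  qed (use ca fc fa b N in \<open>auto simp: a_def[symmetric] c_def[symmetric]\<close>)
qed

text \<open>Follow the trail starting at the slot $d$ alternately through the pairing $f$ and through a
slot outside $D$ carrying the $fl$-image of the current label; the balance of the labels outside
$D$ means that this never gets stuck, so the trail ends at a second slot of $D$.\<close>

lemma involution_closed_subset: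
  fixes lab :: "'n \<Rightarrow> 'l"
  assumes "finite N" "D \<subseteq> N" "d \<in> D" "pairing_on N f"
    and "\<forall>a\<in>N. fl (lab a) \<noteq> lab a" "\<forall>l. fl (fl l) = l"
    and "image_mset fl (image_mset lab (mset_set (N - D))) = image_mset lab (mset_set (N - D))"
  shows "\<exists>S\<subseteq>N. d \<in> S \<and> (\<forall>a\<in>S. f a \<in> S) \<and> card (S \<inter> D) = 2 \<and>
     image_mset fl (image_mset lab (mset_set (S - D))) = image_mset lab (mset_set (S - D))"
  using assms
proof (induction "card N" arbitrary: N f rule: less_induct)
  case less
  note fN = less.prems(1) and DN = less.prems(2) and dD = less.prems(3) and f = less.prems(4)
    and labf = less.prems(5) and flf = less.prems(6) and bal = less.prems(7)
  have dN: "d \<in> N" using dD DN by auto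
  define a where "a = f d"
  have aN: "a \<in> N" and fa: "f a = d" and ad: "a \<noteq> d" using f dN by (auto simp: a_def pairing_on_def)
  show ?case
  proof (cases "a \<in> D")
    case True
    then have "card ({d, a} \<inter> D) = 2" "{d, a} - D = {}" using dD ad by auto
    then show ?thesis using dN aN fa by (intro exI[of _ "{d,a}"]) (auto simp: a_def)
  next
    case False
    have "fl (lab a) \<in># image_mset fl (image_mset lab (mset_set (N - D)))" using False aN fN by auto
    then obtain b where bND: "b \<in> N - D" and lb: "lab b = fl (lab a)" using bal fN by auto
    have ba: "b \<noteq> a" using lb labf aN by force
    have bd: "b \<noteq> d" using bND dD by auto
    define c where "c = f b"
    define N' where "N' = N - {a, b}"
    define f' where "f' = f(d := c, c := d)"
    have lt: "card N' < card N" using aN fN by (auto simp: N'_def intro: psubset_card_mono)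
    have DN': "D \<subseteq> N'" using DN False bND by (auto simp: N'_def)
    have f': "pairing_on N' f'"
      using pairing_on_shortcut[OF f dN _ bd] bND ba by (simp add: N'_def f'_def a_def c_def)
    have decomp: "mset_set (N - D) = add_mset a (add_mset b (mset_set (N' - D)))"
    proof -
      have "N - D = insert a (insert b (N' - D))" using aN False bND ba by (auto simp: N'_def)
      then show ?thesis using fN ba by (simp add: N'_def)
    qed
    have bal': "image_mset fl (image_mset lab (mset_set (N' - D))) = image_mset lab (mset_set (N' - D))"
      using bal image_mset_involution_add_pair[OF flf, of "lab a"] by (simp add: decomp lb)
    obtain S' where S': "S' \<subseteq> N'" "d \<in> S'" "\<forall>z\<in>S'. f' z \<in> S'" "card (S' \<inter> D) = 2"
      "image_mset fl (image_mset lab (mset_set (S' - D))) = image_mset lab (mset_set (S' - D))"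
      using less.hyps[OF lt _ DN' dD f' _ flf bal'] fN labf by (auto simp: N'_def)
    define S where "S = insert a (insert b S')"
    have "c \<noteq> d" using f bND ba by (auto simp: c_def a_def pairing_on_def)
    then have "c \<in> S'" using S'(2,3) by (force simp: f'_def)
    have closed: "\<forall>z\<in>S. f z \<in> S"
    proof
      fix z assume "z \<in> S"
      then consider "z = a" | "z = b" | "z = d" | "z = c" | "z \<in> S'" "z \<noteq> c" "z \<noteq> d"
        unfolding S_def by blast
      then show "f z \<in> S"
      proof cases
        case 4
        then show ?thesis using f bND by (simp add: S_def c_def pairing_on_def)
      next
        case 5
        then show ?thesis using S'(3) by (force simp: S_def f'_def)
      qed (use fa S'(2) \<open>c \<in> S'\<close> in \<open>simp_all add: S_def a_def c_def\<close>)
    qed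
    have "S \<inter> D = S' \<inter> D" using False bND by (auto simp: S_def)
    moreover have "mset_set (S - D) = add_mset a (add_mset b (mset_set (S' - D)))"
    proof -
      have "S - D = insert a (insert b (S' - D))" using False bND by (auto simp: S_def)
      moreover have "finite S'" "a \<notin> S'" "b \<notin> S'" using S'(1) fN finite_subset by (auto simp: N'_def)
      ultimately show ?thesis using ba by simp
    qed
    moreover have "S \<subseteq> N" using S'(1) aN bND by (auto simp: S_def N'_def)
    ultimately show ?thesis
      using S'(2,4,5) closed image_mset_involution_add_pair[OF flf, of "lab a"]
      by (intro exI[of _ S]) (simp add: S_def lb flf)
  qed
qed

lemma image_mset_diff_of_balance:
  assumes "\<And>x. fl (fl x) = x" "Q + image_mset fl D = image_mset fl Q + D" "D \<subseteq># Q"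
  shows "image_mset fl (Q - D) = Q - D"
proof (rule multiset_eqI)
  fix e
  have c1: "count Q e + count (image_mset fl D) e = count (image_mset fl Q) e + count D e"
    using assms(2) by (metis count_union)
  have c2: "count D e \<le> count Q e" using assms(3) by (simp add: subseteq_mset_def)
  have c3: "count (image_mset fl D) e \<le> count (image_mset fl Q) e"
    using image_mset_subseteq_mono[OF assms(3), of fl] by (simp add: subseteq_mset_def)
  show "count (image_mset fl (Q - D)) e = count (Q - D) e"
    using c1 c2 c3 image_mset_Diff[OF assms(3), of fl] by simp
qed

definition transpose_edge :: "nat \<Rightarrow> nat \<Rightarrow> nat set \<Rightarrow> nat set" where
  "transpose_edge \<alpha> \<beta> e = transpose \<alpha> \<beta> ` e"

definition crossing :: "nat \<Rightarrow> nat \<Rightarrow> nat set \<Rightarrow> bool" where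
  "crossing \<alpha> \<beta> e \<longleftrightarrow> (\<alpha> \<in> e) \<noteq> (\<beta> \<in> e)"

lemma transpose_edge_pair [simp]: "transpose_edge \<alpha> \<beta> {a, b} = {transpose \<alpha> \<beta> a, transpose \<alpha> \<beta> b}"
  by (simp add: transpose_edge_def)

lemma transpose_edge_involutory [simp]: "transpose_edge \<alpha> \<beta> (transpose_edge \<alpha> \<beta> e) = e"
  by (simp add: transpose_edge_def image_image)

lemma crossing_transpose_edge_neq: "crossing \<alpha> \<beta> e \<Longrightarrow> transpose_edge \<alpha> \<beta> e \<noteq> e"
  by (auto simp: crossing_def transpose_edge_def transpose_def)

lemma crossing_transpose_edge [simp]: "crossing \<alpha> \<beta> (transpose_edge \<alpha> \<beta> e) = crossing \<alpha> \<beta> e"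
  by (auto simp: crossing_def transpose_edge_def transpose_def split: if_splits)

lemma filter_crossing_image_transpose_edge:
  "filter_mset (crossing \<alpha> \<beta>) (image_mset (transpose_edge \<alpha> \<beta>) A)
    = image_mset (transpose_edge \<alpha> \<beta>) (filter_mset (crossing \<alpha> \<beta>) A)"
  by (induction A) auto

lemma filter_crossing_path_edges:
  "\<alpha> \<notin> set Q \<Longrightarrow> \<beta> \<notin> set Q \<Longrightarrow> filter_mset (crossing \<alpha> \<beta>) (path_edges Q) = {#}"
  by (auto simp: filter_mset_eq_conv crossing_def dest!: path_edges_subset)

lemma filter_crossing_cycle_edges:
  "\<alpha> \<notin> set Q \<Longrightarrow> \<beta> \<notin> set Q \<Longrightarrow> filter_mset (crossing \<alpha> \<beta>) (cycle_edges Q) = {#}"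
  by (auto simp: filter_mset_eq_conv crossing_def dest!: cycle_edges_subset)

lemma filter_crossing_segment:
  assumes "{u, w} = {\<alpha>, \<beta>}" "\<alpha> \<noteq> \<beta>" "\<alpha> \<notin> set Q" "\<beta> \<notin> set Q"
  shows "filter_mset (crossing \<alpha> \<beta>) (path_edges (u # Q @ [w]))
    = (if Q = [] then {#} else {#{u, hd Q}, {last Q, w}#})"
proof (cases "Q = []")
  case True
  then show ?thesis using assms by (auto simp: crossing_def doubleton_eq_iff)
next
  case False
  have "hd Q \<in> set Q" "last Q \<in> set Q" using False by auto
  then show ?thesis using assms False
    by (auto simp: path_edges_Cons_snoc filter_crossing_path_edges crossing_def doubleton_eq_iff)
qed

lemma segment_rev_switch:
  assumes "{u, w} = {\<alpha>, \<beta>}" "\<alpha> \<noteq> \<beta>" "\<alpha> \<notin> set Q" "\<beta> \<notin> set Q" "Q \<noteq> []"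
  shows "path_edges (u # rev Q @ [w]) + {#{u, hd Q}, {last Q, w}#}
       = path_edges (u # Q @ [w]) + {#transpose_edge \<alpha> \<beta> {u, hd Q}, transpose_edge \<alpha> \<beta> {last Q, w}#}"
proof -
  have "hd Q \<in> set Q" "last Q \<in> set Q" using assms(5) by auto
  then have "transpose \<alpha> \<beta> (hd Q) = hd Q" "transpose \<alpha> \<beta> (last Q) = last Q"
    using assms(3,4) by (metis transpose_apply_other)+
  moreover have "transpose \<alpha> \<beta> u = w" "transpose \<alpha> \<beta> w = u"
    using assms(1,2) by (auto simp: doubleton_eq_iff)
  moreover have "rev Q \<noteq> []" "hd (rev Q) = last Q" "last (rev Q) = hd Q"
    using assms(5) by (auto simp: hd_rev last_rev)
  ultimately show ?thesis using assms(5)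
    by (simp add: path_edges_Cons_snoc path_edges_rev insert_commute add_mset_commute)
qed

lemma filter_crossing_cycle_Cons:
  assumes "\<gamma> \<in> {\<alpha>, \<beta>}" "\<alpha> \<noteq> \<beta>" "\<alpha> \<notin> set P" "\<beta> \<notin> set P" "P \<noteq> []"
  shows "filter_mset (crossing \<alpha> \<beta>) (cycle_edges (\<gamma> # P)) = {#{\<gamma>, hd P}, {last P, \<gamma>}#}"
proof -
  have "hd P \<in> set P" "last P \<in> set P" using assms by auto
  then show ?thesis using assms
    by (auto simp: cycle_edges_Cons path_edges_Cons_snoc filter_crossing_path_edges crossing_def)
qed

lemma cycle_Cons_switch:
  assumes "{\<gamma>, \<gamma>'} = {\<alpha>, \<beta>}" "\<alpha> \<noteq> \<beta>" "\<alpha> \<notin> set P" "\<beta> \<notin> set P" "P \<noteq> []"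
  shows "cycle_edges (\<gamma>' # P) + {#{\<gamma>, hd P}, {last P, \<gamma>}#}
    = cycle_edges (\<gamma> # P) + {#transpose_edge \<alpha> \<beta> {\<gamma>, hd P}, transpose_edge \<alpha> \<beta> {last P, \<gamma>}#}"
proof -
  have "hd P \<in> set P" "last P \<in> set P" using assms by auto
  then have "transpose \<alpha> \<beta> (hd P) = hd P" "transpose \<alpha> \<beta> (last P) = last P"
    using assms(3,4) by (metis transpose_apply_other)+
  moreover have "transpose \<alpha> \<beta> \<gamma> = \<gamma>'" using assms(1,2) by (auto simp: doubleton_eq_iff)
  ultimately show ?thesis using assms(5)
    by (simp add: cycle_edges_Cons path_edges_Cons_snoc add_mset_commute)
qed

text \<open>The crossing edges of a cycle come in at most two pairs that can be switched independently.
A normalized cycle starts at $\alpha$ if it passes through $\alpha$, and at $\beta$ if it passes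
through $\beta$ only. If it passes through both, it is $\alpha P_1 \beta P_2$; slots $0,1$ are the
end edges of the path $\alpha P_1 \beta$ and slots $2,3$ those of $\beta P_2 \alpha$, and switching
a pair reverses the corresponding $P_i$. If it passes through just one of them, slots $0,1$ are
the two edges there and switching replaces that vertex by the other one.\<close>

definition seg_before :: "nat \<Rightarrow> nat list \<Rightarrow> nat list" where
  "seg_before \<beta> P = takeWhile (\<lambda>z. z \<noteq> \<beta>) P"

definition seg_after :: "nat \<Rightarrow> nat list \<Rightarrow> nat list" where
  "seg_after \<beta> P = tl (dropWhile (\<lambda>z. z \<noteq> \<beta>) P)"

definition normalized :: "nat \<Rightarrow> nat \<Rightarrow> nat list \<Rightarrow> bool" where
  "normalized \<alpha> \<beta> c \<longleftrightarrow> c \<noteq> [] \<and> (hd c = \<alpha> \<or> (hd c = \<beta> \<and> \<alpha> \<notin> set c) \<or> (\<alpha> \<notin> set c \<and> \<beta> \<notin> set c))"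

definition cycle_slots :: "nat \<Rightarrow> nat \<Rightarrow> nat list \<Rightarrow> nat set" where
  "cycle_slots \<alpha> \<beta> c = (if c \<noteq> [] \<and> hd c = \<alpha> then
      (if \<beta> \<in> set (tl c)
       then (if seg_before \<beta> (tl c) = [] then {} else {0,1}) \<union> (if seg_after \<beta> (tl c) = [] then {} else {2,3})
       else {0,1})
    else if c \<noteq> [] \<and> hd c = \<beta> \<and> \<alpha> \<notin> set c then {0,1} else {})"

definition cycle_slot_edge :: "nat \<Rightarrow> nat \<Rightarrow> nat list \<Rightarrow> nat \<Rightarrow> nat set" where
  "cycle_slot_edge \<alpha> \<beta> c t = (if hd c = \<alpha> \<and> \<beta> \<in> set (tl c) then
      (if t = 0 then {\<alpha>, hd (seg_before \<beta> (tl c))} else if t = 1 then {last (seg_before \<beta> (tl c)), \<beta>}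
       else if t = 2 then {\<beta>, hd (seg_after \<beta> (tl c))} else {last (seg_after \<beta> (tl c)), \<alpha>})
    else (if t = 0 then {hd c, hd (tl c)} else {last (tl c), hd c}))"

definition switch_cycle :: "nat \<Rightarrow> nat \<Rightarrow> nat list \<Rightarrow> bool \<Rightarrow> bool \<Rightarrow> nat list" where
  "switch_cycle \<alpha> \<beta> c s1 s2 = (if c \<noteq> [] \<and> hd c = \<alpha> then
      (if \<beta> \<in> set (tl c)
       then \<alpha> # (if s1 then rev (seg_before \<beta> (tl c)) else seg_before \<beta> (tl c))
              @ \<beta> # (if s2 then rev (seg_after \<beta> (tl c)) else seg_after \<beta> (tl c))
       else (if s1 then \<beta> # tl c else c))
    else if c \<noteq> [] \<and> hd c = \<beta> \<and> \<alpha> \<notin> set c then (if s1 then \<alpha> # tl c else c) else c)"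

definition slot_pairs :: "bool \<Rightarrow> bool \<Rightarrow> nat set" where
  "slot_pairs s1 s2 = (if s1 then {0,1} else {}) \<union> (if s2 then {2,3} else {})"

lemma cycle_slots_subset: "cycle_slots \<alpha> \<beta> c \<subseteq> {0,1,2,3}"
  by (auto simp: cycle_slots_def)

lemma cycle_slots_pairs:
  "(0 \<in> cycle_slots \<alpha> \<beta> c \<longleftrightarrow> 1 \<in> cycle_slots \<alpha> \<beta> c) \<and> (2 \<in> cycle_slots \<alpha> \<beta> c \<longleftrightarrow> 3 \<in> cycle_slots \<alpha> \<beta> c)"
  by (auto simp: cycle_slots_def)

lemma sum_slot_pairs:
  "(\<Sum>t\<in>slot_pairs s1 s2. g t) = (if s1 then g 0 + g 1 else 0) + (if s2 then g 2 + g (3::nat) else 0)"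
  by (cases s1; cases s2) (auto simp: slot_pairs_def ac_simps)

lemma seg_before_after:
  assumes "\<beta> \<notin> set P1"
  shows "seg_before \<beta> (P1 @ \<beta> # P2) = P1" "seg_after \<beta> (P1 @ \<beta> # P2) = P2"
  using assms by (induction P1) (auto simp: seg_before_def seg_after_def)

lemma cycle_slots_two_segments:
  assumes "\<beta> \<notin> set P1" "\<alpha> \<noteq> \<beta>"
  shows "cycle_slots \<alpha> \<beta> (\<alpha> # P1 @ \<beta> # P2)
      = (if P1 = [] then {} else {0,1}) \<union> (if P2 = [] then {} else {2,3})"
    and "cycle_slot_edge \<alpha> \<beta> (\<alpha> # P1 @ \<beta> # P2) t
      = (if t = 0 then {\<alpha>, hd P1} else if t = 1 then {last P1, \<beta>}
         else if t = 2 then {\<beta>, hd P2} else {last P2, \<alpha>})"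
    and "switch_cycle \<alpha> \<beta> (\<alpha> # P1 @ \<beta> # P2) s1 s2
      = \<alpha> # (if s1 then rev P1 else P1) @ \<beta> # (if s2 then rev P2 else P2)"
  using assms by (simp_all add: cycle_slots_def cycle_slot_edge_def switch_cycle_def seg_before_after)

lemma cycle_slots_one_vertex:
  assumes "{\<gamma>, \<gamma>'} = {\<alpha>, \<beta>}" "\<alpha> \<noteq> \<beta>" "\<gamma>' \<notin> set P"
  shows "cycle_slots \<alpha> \<beta> (\<gamma> # P) = {0,1}"
    and "cycle_slot_edge \<alpha> \<beta> (\<gamma> # P) t = (if t = 0 then {\<gamma>, hd P} else {last P, \<gamma>})"
    and "switch_cycle \<alpha> \<beta> (\<gamma> # P) s1 s2 = (if s1 then \<gamma>' # P else \<gamma> # P)"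
  using assms by (auto simp: cycle_slots_def cycle_slot_edge_def switch_cycle_def doubleton_eq_iff)

lemma cycle_slots_no_vertex:
  assumes "\<alpha> \<notin> set c" "\<beta> \<notin> set c"
  shows "cycle_slots \<alpha> \<beta> c = {}" and "switch_cycle \<alpha> \<beta> c s1 s2 = c"
  using assms by (auto simp: cycle_slots_def switch_cycle_def)

lemma normalized_cycleE:
  assumes c: "is_cycle_list c" "normalized \<alpha> \<beta> c"
  obtains (two) P1 P2 where "c = \<alpha> # P1 @ \<beta> # P2" "distinct P1" "distinct P2" "set P1 \<inter> set P2 = {}"
      "\<alpha> \<notin> set P1" "\<beta> \<notin> set P1" "\<alpha> \<notin> set P2" "\<beta> \<notin> set P2"
  | (one) \<gamma> \<gamma>' P where "{\<gamma>, \<gamma>'} = {\<alpha>, \<beta>}" "c = \<gamma> # P" "P \<noteq> []" "distinct P"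
      "\<alpha> \<notin> set P" "\<beta> \<notin> set P"
  | (none) "\<alpha> \<notin> set c" "\<beta> \<notin> set c"
proof -
  obtain a P where cP: "c = a # P" using c by (cases c) (auto simp: normalized_def)
  then have P: "P \<noteq> []" "a \<notin> set P" "distinct P" using c by (auto simp: is_cycle_list_def)
  consider "a = \<alpha>" "\<beta> \<in> set P" | "a = \<alpha>" "\<beta> \<notin> set P" | "a = \<beta>" "\<alpha> \<notin> set c" | "\<alpha> \<notin> set c" "\<beta> \<notin> set c"
    using c(2) cP by (auto simp: normalized_def)
  then show thesis
  proof cases
    case 1
    then obtain P1 P2 where "P = P1 @ \<beta> # P2" "\<beta> \<notin> set P1" by (auto dest: split_list_first)
    then show thesis using two cP P 1 by auto
  next
    case 2
    then show thesis using one[of \<alpha> \<beta> P] cP P by auto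
  next
    case 3
    then show thesis using one[of \<beta> \<alpha> P] cP P by auto
  qed (rule none)
qed

lemma filter_crossing_normalized_cycle:
  assumes c: "is_cycle_list c" "normalized \<alpha> \<beta> c" and ab: "\<alpha> \<noteq> \<beta>"
  shows "filter_mset (crossing \<alpha> \<beta>) (cycle_edges c) = (\<Sum>t\<in>cycle_slots \<alpha> \<beta> c. {#cycle_slot_edge \<alpha> \<beta> c t#})"
  using c
proof (cases rule: normalized_cycleE)
  case (two P1 P2)
  have ce: "cycle_edges (\<alpha> # P1 @ \<beta> # P2) = path_edges (\<alpha> # P1 @ [\<beta>]) + path_edges (\<beta> # P2 @ [\<alpha>])"
    using path_edges_append[of "\<alpha> # P1" \<beta> "P2 @ [\<alpha>]"] by (simp add: cycle_edges_Cons)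
  have "{\<beta>, \<alpha>} = {\<alpha>, \<beta>}" by auto
  then show ?thesis
    unfolding two(1) ce filter_union_mset cycle_slots_two_segments[OF two(6) ab]
    using two ab filter_crossing_segment[of \<alpha> \<beta> \<alpha> \<beta> P1] filter_crossing_segment[of \<beta> \<alpha> \<alpha> \<beta> P2]
    by (cases "P1 = []"; cases "P2 = []") simp_all
next
  case (one \<gamma> \<gamma>' P)
  then have "\<gamma> \<in> {\<alpha>, \<beta>}" "\<gamma>' \<notin> set P" by auto
  then show ?thesis using one ab
    by (simp add: cycle_slots_one_vertex[OF one(1) ab] filter_crossing_cycle_Cons)
next
  case none
  then show ?thesis by (simp add: cycle_slots_no_vertex filter_crossing_cycle_edges)
qed

lemma switch_cycle_edges:
  assumes c: "is_cycle_list c" "normalized \<alpha> \<beta> c" and ab: "\<alpha> \<noteq> \<beta>"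
    and s1: "s1 \<Longrightarrow> 0 \<in> cycle_slots \<alpha> \<beta> c" and s2: "s2 \<Longrightarrow> 2 \<in> cycle_slots \<alpha> \<beta> c"
  shows "cycle_edges (switch_cycle \<alpha> \<beta> c s1 s2) + (\<Sum>t\<in>slot_pairs s1 s2. {#cycle_slot_edge \<alpha> \<beta> c t#})
       = cycle_edges c + (\<Sum>t\<in>slot_pairs s1 s2. {#transpose_edge \<alpha> \<beta> (cycle_slot_edge \<alpha> \<beta> c t)#})
     \<and> is_cycle_list (switch_cycle \<alpha> \<beta> c s1 s2) \<and> length (switch_cycle \<alpha> \<beta> c s1 s2) = length c"
  using c
proof (cases rule: normalized_cycleE)
  case (two P1 P2)
  note slots = cycle_slots_two_segments[OF two(6) ab]
  define Q1 where "Q1 = (if s1 then rev P1 else P1)"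
  define Q2 where "Q2 = (if s2 then rev P2 else P2)"
  have path_edges_cycle: "cycle_edges (\<alpha> # R1 @ \<beta> # R2) = path_edges (\<alpha> # R1 @ [\<beta>]) + path_edges (\<beta> # R2 @ [\<alpha>])"
    for R1 R2
    using path_edges_append[of "\<alpha> # R1" \<beta> "R2 @ [\<alpha>]"] by (simp add: cycle_edges_Cons)
  have e1: "path_edges (\<alpha> # Q1 @ [\<beta>]) + (if s1 then {#{\<alpha>, hd P1}, {last P1, \<beta>}#} else {#})
     = path_edges (\<alpha> # P1 @ [\<beta>])
       + (if s1 then {#transpose_edge \<alpha> \<beta> {\<alpha>, hd P1}, transpose_edge \<alpha> \<beta> {last P1, \<beta>}#} else {#})"
  proof (cases s1)
    case True
    then have "P1 \<noteq> []" using s1 two(1) by (auto simp: slots split: if_splits)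
    then show ?thesis using segment_rev_switch[of \<alpha> \<beta> \<alpha> \<beta> P1] True two ab by (simp add: Q1_def)
  qed (simp add: Q1_def)
  have e2: "path_edges (\<beta> # Q2 @ [\<alpha>]) + (if s2 then {#{\<beta>, hd P2}, {last P2, \<alpha>}#} else {#})
     = path_edges (\<beta> # P2 @ [\<alpha>])
       + (if s2 then {#transpose_edge \<alpha> \<beta> {\<beta>, hd P2}, transpose_edge \<alpha> \<beta> {last P2, \<alpha>}#} else {#})"
  proof (cases s2)
    case True
    then have "P2 \<noteq> []" using s2 two(1) by (auto simp: slots split: if_splits)
    moreover have "{\<beta>, \<alpha>} = {\<alpha>, \<beta>}" by auto
    ultimately show ?thesis using segment_rev_switch[of \<beta> \<alpha> \<alpha> \<beta> P2] True two ab by (simp add: Q2_def)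
  qed (simp add: Q2_def)
  have "cycle_edges (\<alpha> # Q1 @ \<beta> # Q2)
      + (\<Sum>t\<in>slot_pairs s1 s2. {#cycle_slot_edge \<alpha> \<beta> (\<alpha> # P1 @ \<beta> # P2) t#})
    = (path_edges (\<alpha> # Q1 @ [\<beta>]) + (if s1 then {#{\<alpha>, hd P1}, {last P1, \<beta>}#} else {#}))
      + (path_edges (\<beta> # Q2 @ [\<alpha>]) + (if s2 then {#{\<beta>, hd P2}, {last P2, \<alpha>}#} else {#}))"
    unfolding path_edges_cycle sum_slot_pairs by (simp add: slots)
  also have "\<dots> = cycle_edges (\<alpha> # P1 @ \<beta> # P2)
      + (\<Sum>t\<in>slot_pairs s1 s2. {#transpose_edge \<alpha> \<beta> (cycle_slot_edge \<alpha> \<beta> (\<alpha> # P1 @ \<beta> # P2) t)#})"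
    unfolding e1 e2 path_edges_cycle sum_slot_pairs by (simp add: slots)
  finally show ?thesis
    using two ab by (simp add: slots Q1_def Q2_def is_cycle_list_def)
next
  case (one \<gamma> \<gamma>' P)
  then have "\<gamma>' \<notin> set P" by auto
  note slots = cycle_slots_one_vertex[OF one(1) ab this]
  have "\<not> s2" using s2 one(2) by (auto simp: slots)
  show ?thesis
  proof (cases s1)
    case True
    have "cycle_edges (\<gamma>' # P) + {#{\<gamma>, hd P}, {last P, \<gamma>}#}
      = cycle_edges (\<gamma> # P) + {#transpose_edge \<alpha> \<beta> {\<gamma>, hd P}, transpose_edge \<alpha> \<beta> {last P, \<gamma>}#}"
      using cycle_Cons_switch one ab by blast
    then show ?thesis using True \<open>\<not> s2\<close> one \<open>\<gamma>' \<notin> set P\<close> c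
      by (simp add: slots sum_slot_pairs add_mset_commute is_cycle_list_def)
  next
    case False
    then show ?thesis using \<open>\<not> s2\<close> one(2) c by (simp add: slots slot_pairs_def)
  qed
next
  case none
  then have "\<not> s1" "\<not> s2" using s1 s2 by (auto simp: cycle_slots_no_vertex)
  then show ?thesis using none c by (simp add: cycle_slots_no_vertex slot_pairs_def)
qed

lemma normalize_cycle:
  assumes "is_cycle_list c"
  obtains c' where "is_cycle_list c'" "normalized \<alpha> \<beta> c'" "length c' = length c" "cycle_edges c' = cycle_edges c"
proof (cases "\<alpha> \<in> set c \<or> \<beta> \<in> set c")
  case True
  then obtain \<gamma> where "\<gamma> \<in> set c" "\<gamma> = \<alpha> \<or> (\<gamma> = \<beta> \<and> \<alpha> \<notin> set c)" by blast
  moreover obtain c' where "is_cycle_list c'" "length c' = length c" "cycle_edges c' = cycle_edges c"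
    "set c' = set c" "c' = \<gamma> # tl c'"
    by (rule is_cycle_list_rotate_to[OF assms \<open>\<gamma> \<in> set c\<close>])
  ultimately show thesis using that by (metis list.distinct(1) list.sel(1) normalized_def)
next
  case False
  moreover have "c \<noteq> []" using assms by (auto simp: is_cycle_list_def)
  ultimately show thesis using that[of c] assms by (simp add: normalized_def)
qed

lemma normalize_cycles:
  assumes "\<forall>c\<in>set Cs. is_cycle_list c"
  obtains Cs' where "\<forall>c\<in>set Cs'. is_cycle_list c \<and> normalized \<alpha> \<beta> c" "map length Cs' = map length Cs"
    "sum_list (map cycle_edges Cs') = sum_list (map cycle_edges Cs)"
  using assms
proof (induction Cs arbitrary: thesis)
  case (Cons c Cs)
  obtain Cs' where "\<forall>c\<in>set Cs'. is_cycle_list c \<and> normalized \<alpha> \<beta> c" "map length Cs' = map length Cs"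
     "sum_list (map cycle_edges Cs') = sum_list (map cycle_edges Cs)"
    using Cons.IH Cons.prems(2) by auto
  moreover obtain c' where "is_cycle_list c'" "normalized \<alpha> \<beta> c'" "length c' = length c" "cycle_edges c' = cycle_edges c"
    using normalize_cycle Cons.prems(2) by (metis list.set_intros(1))
  ultimately show ?case using Cons.prems(1)[of "c' # Cs'"] by auto
qed simp

definition partner_slot :: "nat \<times> nat \<Rightarrow> nat \<times> nat" where
  "partner_slot = (\<lambda>(i, t). (i, if even t then t + 1 else t - 1))"

lemma partner_closed_fibre:
  assumes S: "S \<subseteq> UNIV \<times> {0,1,2,3}" "\<forall>a\<in>S. partner_slot a \<in> S"
  shows "{a \<in> S. fst a = i} = Pair i ` slot_pairs ((i, 0) \<in> S) ((i, 2) \<in> S)"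
proof -
  define s1 s2 where "s1 = ((i, 0) \<in> S)" and "s2 = ((i, 2) \<in> S)"
  have "(i, t) \<in> S \<longleftrightarrow> t \<in> slot_pairs s1 s2" for t
  proof
    assume it: "(i, t) \<in> S"
    have p: "partner_slot (i, t) \<in> S" using S(2) it by blast
    have "t \<in> {0,1,2,3}" using it S(1) by auto
    then consider "t = 0" | "t = 1" | "t = 2" | "t = 3" by auto
    then show "t \<in> slot_pairs s1 s2"
      using it p by cases (simp_all add: slot_pairs_def partner_slot_def s1_def s2_def)
  next
    assume "t \<in> slot_pairs s1 s2"
    then consider "t = 0" "s1" | "t = 1" "s1" | "t = 2" "s2" | "t = 3" "s2"
      by (auto simp: slot_pairs_def split: if_splits)
    then show "(i, t) \<in> S"
    proof cases
      case 2 then show ?thesis using S(2)[rule_format, of "(i, 0)"] by (simp add: partner_slot_def s1_def)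
    next
      case 4 then show ?thesis using S(2)[rule_format, of "(i, 2)"] by (simp add: partner_slot_def s2_def)
    qed (simp_all add: s1_def s2_def)
  qed
  then have "{a \<in> S. fst a = i} = Pair i ` slot_pairs s1 s2" by force
  then show ?thesis by (simp only: s1_def s2_def)
qed
text \<open>The crossing edges of a graph decomposed into normalized cycles $C_0, \dots, C_{k-1}$ and a
matching $I$ are indexed by slots $(i, t)$: the slots with $i < k$ are those of the cycle $C_i$,
and the slots $(k, t)$ with $t \in T$ are the (zero or two) crossing edges of $I$.
The slots $(i, 2j)$ and $(i, 2j + 1)$ can only be switched together.\<close>

context
  fixes \<alpha> \<beta> :: nat and Cs :: "nat list list" and T :: "nat set" and me :: "nat \<Rightarrow> nat set" and I :: mgraph
  assumes ab: "\<alpha> \<noteq> \<beta>"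
    and cycles: "\<forall>c\<in>set Cs. is_cycle_list c \<and> normalized \<alpha> \<beta> c"
    and T: "T = {} \<or> T = {0,1}"
    and filter_crossing_I: "filter_mset (crossing \<alpha> \<beta>) I = (\<Sum>t\<in>T. {#me t#})"
begin

definition slots :: "(nat \<times> nat) set" where
  "slots = (SIGMA i:{..<length Cs}. cycle_slots \<alpha> \<beta> (Cs ! i)) \<union> ({length Cs} \<times> T)"

definition slot_edge :: "nat \<times> nat \<Rightarrow> nat set" where
  "slot_edge = (\<lambda>(i, t). if i < length Cs then cycle_slot_edge \<alpha> \<beta> (Cs ! i) t else me t)"

lemma slots_subset: "slots \<subseteq> {..length Cs} \<times> {0,1,2,3}"
  using cycle_slots_subset T by (auto simp: slots_def)

lemma finite_slots: "finite slots"
  by (rule finite_subset[OF slots_subset]) auto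

lemma pairing_on_slots: "pairing_on slots partner_slot"
  unfolding pairing_on_def
proof
  fix a assume aN: "a \<in> slots"
  obtain i t where a: "a = (i, t)" by (cases a)
  have t4: "t \<in> {0,1,2,3}" using aN slots_subset a by auto
  define t' where "t' = (if even t then t + 1 else t - 1)"
  have t': "t' \<in> {0,1,2,3}" "t' div 2 = t div 2" "t' \<noteq> t" "(if even t' then t' + 1 else t' - 1) = t"
    using t4 by (auto simp: t'_def)
  have "(i, t') \<in> slots"
  proof (cases "i < length Cs")
    case True
    then have "t \<in> cycle_slots \<alpha> \<beta> (Cs ! i)" using aN a by (auto simp: slots_def)
    then show ?thesis using cycle_slots_pairs[of \<alpha> \<beta> "Cs ! i"] True t' t4 by (auto simp: slots_def)
  next
    case False
    then have "i = length Cs" "t \<in> T" using aN a by (auto simp: slots_def)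
    then show ?thesis using T t' t4 by (auto simp: slots_def)
  qed
  then show "partner_slot a \<in> slots \<and> partner_slot (partner_slot a) = a \<and> partner_slot a \<noteq> a"
    using t' a by (simp add: partner_slot_def t'_def[symmetric])
qed

lemma image_slot_edge_slots:
  "image_mset slot_edge (mset_set slots) = filter_mset (crossing \<alpha> \<beta>) (sum_list (map cycle_edges Cs) + I)"
proof -
  let ?K = "length Cs" and ?Sl = "SIGMA i:{..<length Cs}. cycle_slots \<alpha> \<beta> (Cs ! i)"
  have fin: "\<forall>i\<in>{..<?K}. finite (cycle_slots \<alpha> \<beta> (Cs ! i))" using finite_subset[OF cycle_slots_subset] by auto
  have "image_mset slot_edge (mset_set slots) = (\<Sum>a\<in>?Sl \<union> {?K} \<times> T. {#slot_edge a#})"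
    using finite_slots by (simp add: slots_def image_mset_mset_set_conv_sum)
  also have "\<dots> = (\<Sum>a\<in>?Sl. {#slot_edge a#}) + (\<Sum>a\<in>{?K} \<times> T. {#slot_edge a#})"
    by (rule sum.union_disjoint) (use fin T in auto)
  also have "(\<Sum>a\<in>?Sl. {#slot_edge a#}) = (\<Sum>i<?K. \<Sum>t\<in>cycle_slots \<alpha> \<beta> (Cs ! i). {#slot_edge (i, t)#})"
    by (subst sum.Sigma) (use fin in \<open>auto simp: case_prod_eta\<close>)
  also have "\<dots> = (\<Sum>i<?K. \<Sum>t\<in>cycle_slots \<alpha> \<beta> (Cs ! i). {#cycle_slot_edge \<alpha> \<beta> (Cs ! i) t#})"
    by (intro sum.cong) (auto simp: slot_edge_def)
  also have "\<dots> = (\<Sum>i<?K. filter_mset (crossing \<alpha> \<beta>) (cycle_edges (Cs ! i)))"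
    using filter_crossing_normalized_cycle cycles ab by (intro sum.cong) auto
  also have "{?K} \<times> T = Pair ?K ` T" by auto
  then have "(\<Sum>a\<in>{?K} \<times> T. {#slot_edge a#}) = filter_mset (crossing \<alpha> \<beta>) I"
    using filter_crossing_I by (simp add: sum.reindex inj_on_def slot_edge_def)
  finally show ?thesis
    by (simp add: sum_list_sum_nth[of "map cycle_edges Cs"] filter_mset_sum atLeast0LessThan)
qed

lemma crossing_slot_edge:
  assumes "a \<in> slots"
  shows "crossing \<alpha> \<beta> (slot_edge a)"
proof -
  have "slot_edge a \<in># image_mset slot_edge (mset_set slots)" using assms finite_slots by simp
  then show ?thesis unfolding image_slot_edge_slots by auto
qed

lemma sum_closed_slots:
  fixes h :: "nat \<times> nat \<Rightarrow> 'a::comm_monoid_add"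
  assumes S: "S \<subseteq> slots" "\<forall>a\<in>S. partner_slot a \<in> S"
  shows "(\<Sum>a\<in>S. h a) = (\<Sum>i\<le>length Cs. \<Sum>t\<in>slot_pairs ((i, 0) \<in> S) ((i, 2) \<in> S). h (i, t))"
proof -
  have "finite S" using S(1) finite_slots finite_subset by blast
  then have "(\<Sum>a\<in>S. h a) = (\<Sum>i\<le>length Cs. \<Sum>a\<in>{a \<in> S. fst a = i}. h a)"
    using S(1) slots_subset by (intro sum.group[symmetric]) auto
  also have "\<dots> = (\<Sum>i\<le>length Cs. \<Sum>t\<in>slot_pairs ((i, 0) \<in> S) ((i, 2) \<in> S). h (i, t))"
  proof (rule sum.cong[OF refl])
    fix i
    have "S \<subseteq> UNIV \<times> {0,1,2,3}" using S(1) slots_subset by auto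
    then have "{a \<in> S. fst a = i} = Pair i ` slot_pairs ((i, 0) \<in> S) ((i, 2) \<in> S)"
      using S(2) by (rule partner_closed_fibre)
    then show "(\<Sum>a\<in>{a \<in> S. fst a = i}. h a) = (\<Sum>t\<in>slot_pairs ((i, 0) \<in> S) ((i, 2) \<in> S). h (i, t))"
      by (simp add: sum.reindex inj_on_def)
  qed
  finally show ?thesis .
qed

lemma switch_cycles:
  assumes s: "\<And>i. i < length Cs \<Longrightarrow> (s1 i \<longrightarrow> 0 \<in> cycle_slots \<alpha> \<beta> (Cs ! i)) \<and> (s2 i \<longrightarrow> 2 \<in> cycle_slots \<alpha> \<beta> (Cs ! i))"
  defines "Cs' \<equiv> map (\<lambda>i. switch_cycle \<alpha> \<beta> (Cs ! i) (s1 i) (s2 i)) [0..<length Cs]"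
  shows "sum_list (map cycle_edges Cs')
      + (\<Sum>i<length Cs. \<Sum>t\<in>slot_pairs (s1 i) (s2 i). {#cycle_slot_edge \<alpha> \<beta> (Cs ! i) t#})
    = sum_list (map cycle_edges Cs)
      + (\<Sum>i<length Cs. \<Sum>t\<in>slot_pairs (s1 i) (s2 i). {#transpose_edge \<alpha> \<beta> (cycle_slot_edge \<alpha> \<beta> (Cs ! i) t)#})"
    and "\<forall>c\<in>set Cs'. is_cycle_list c" and "map length Cs' = map length Cs"
proof -
  have sw: "cycle_edges (switch_cycle \<alpha> \<beta> (Cs ! i) (s1 i) (s2 i))
      + (\<Sum>t\<in>slot_pairs (s1 i) (s2 i). {#cycle_slot_edge \<alpha> \<beta> (Cs ! i) t#})
    = cycle_edges (Cs ! i) + (\<Sum>t\<in>slot_pairs (s1 i) (s2 i). {#transpose_edge \<alpha> \<beta> (cycle_slot_edge \<alpha> \<beta> (Cs ! i) t)#})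
    \<and> is_cycle_list (switch_cycle \<alpha> \<beta> (Cs ! i) (s1 i) (s2 i))
    \<and> length (switch_cycle \<alpha> \<beta> (Cs ! i) (s1 i) (s2 i)) = length (Cs ! i)"
    if "i < length Cs" for i
    using switch_cycle_edges[of "Cs ! i" \<alpha> \<beta>] cycles ab s[OF that] that by auto
  have "sum_list (map cycle_edges Cs')
      + (\<Sum>i<length Cs. \<Sum>t\<in>slot_pairs (s1 i) (s2 i). {#cycle_slot_edge \<alpha> \<beta> (Cs ! i) t#})
    = (\<Sum>i<length Cs. cycle_edges (switch_cycle \<alpha> \<beta> (Cs ! i) (s1 i) (s2 i))
      + (\<Sum>t\<in>slot_pairs (s1 i) (s2 i). {#cycle_slot_edge \<alpha> \<beta> (Cs ! i) t#}))"
    by (simp add: Cs'_def sum_list_sum_nth lessThan_atLeast0 sum.distrib)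
  also have "\<dots> = (\<Sum>i<length Cs. cycle_edges (Cs ! i)
      + (\<Sum>t\<in>slot_pairs (s1 i) (s2 i). {#transpose_edge \<alpha> \<beta> (cycle_slot_edge \<alpha> \<beta> (Cs ! i) t)#}))"
    using sw by (intro sum.cong) auto
  finally show "sum_list (map cycle_edges Cs')
      + (\<Sum>i<length Cs. \<Sum>t\<in>slot_pairs (s1 i) (s2 i). {#cycle_slot_edge \<alpha> \<beta> (Cs ! i) t#})
    = sum_list (map cycle_edges Cs)
      + (\<Sum>i<length Cs. \<Sum>t\<in>slot_pairs (s1 i) (s2 i). {#transpose_edge \<alpha> \<beta> (cycle_slot_edge \<alpha> \<beta> (Cs ! i) t)#})"
    by (simp add: sum_list_sum_nth lessThan_atLeast0 sum.distrib)
  show "\<forall>c\<in>set Cs'. is_cycle_list c" using sw by (auto simp: Cs'_def)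
  show "map length Cs' = map length Cs" by (rule nth_equalityI) (auto simp: Cs'_def sw)
qed

lemma switch_closed_slots:
  assumes switch_I: "T = {0,1} \<Longrightarrow>
      Isw + {#me 0, me 1#} = I + {#transpose_edge \<alpha> \<beta> (me 0), transpose_edge \<alpha> \<beta> (me 1)#}"
    and S: "S \<subseteq> slots" "\<forall>a\<in>S. partner_slot a \<in> S"
  obtains Cs' I' where "\<forall>c\<in>set Cs'. is_cycle_list c" "map length Cs' = map length Cs"
    "I' = I \<or> (I' = Isw \<and> T = {0,1})"
    "sum_list (map cycle_edges Cs') + I' + image_mset slot_edge (mset_set S)
      = sum_list (map cycle_edges Cs) + I + image_mset (transpose_edge \<alpha> \<beta> \<circ> slot_edge) (mset_set S)"
proof -
  define K where "K = length Cs"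
  define s1 where "s1 = (\<lambda>i. (i, 0::nat) \<in> S)"
  define s2 where "s2 = (\<lambda>i. (i, 2::nat) \<in> S)"
  define Cs' where "Cs' = map (\<lambda>i. switch_cycle \<alpha> \<beta> (Cs ! i) (s1 i) (s2 i)) [0..<K]"
  define I' where "I' = (if s1 K then Isw else I)"
  have "(s1 i \<longrightarrow> 0 \<in> cycle_slots \<alpha> \<beta> (Cs ! i)) \<and> (s2 i \<longrightarrow> 2 \<in> cycle_slots \<alpha> \<beta> (Cs ! i))" if "i < K" for i
    using S(1) that by (auto simp: s1_def s2_def slots_def K_def)
  note Cs' = switch_cycles[of s1 s2, OF this[unfolded K_def], folded K_def Cs'_def]
  have K_T: "t \<in> T" if "(K, t) \<in> S" for t using that S(1) by (auto simp: slots_def K_def)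
  have not_s2: "\<not> s2 K"
  proof
    assume "s2 K"
    then have "(2::nat) \<in> T" using K_T unfolding s2_def by blast
    then show False using T by auto
  qed
  have s1_T: "T = {0,1}" if "s1 K"
  proof -
    have "(0::nat) \<in> T" using K_T that unfolding s1_def by blast
    then show ?thesis using T by auto
  qed
  have I': "I' = I \<or> (I' = Isw \<and> T = {0,1})" using s1_T by (auto simp: I'_def)
  have switch_I': "I' + (\<Sum>t\<in>slot_pairs (s1 K) (s2 K). {#me t#})
      = I + (\<Sum>t\<in>slot_pairs (s1 K) (s2 K). {#transpose_edge \<alpha> \<beta> (me t)#})"
  proof (cases "s1 K")
    case True
    then show ?thesis using switch_I[OF s1_T[OF True]] not_s2
      by (simp add: I'_def sum_slot_pairs add_mset_commute)
  qed (simp add: I'_def slot_pairs_def not_s2)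
  have "finite S" using S(1) finite_slots finite_subset by blast
  then have "image_mset g (mset_set S)
      = (\<Sum>i<K. \<Sum>t\<in>slot_pairs (s1 i) (s2 i). {#g (i, t)#}) + (\<Sum>t\<in>slot_pairs (s1 K) (s2 K). {#g (K, t)#})"
    for g :: "nat \<times> nat \<Rightarrow> nat set"
    unfolding image_mset_mset_set_conv_sum[OF \<open>finite S\<close>] sum_closed_slots[OF S]
    by (simp add: lessThan_Suc_atMost[symmetric] s1_def s2_def K_def)
  then have "image_mset slot_edge (mset_set S)
        = (\<Sum>i<K. \<Sum>t\<in>slot_pairs (s1 i) (s2 i). {#cycle_slot_edge \<alpha> \<beta> (Cs ! i) t#})
          + (\<Sum>t\<in>slot_pairs (s1 K) (s2 K). {#me t#})"
    and "image_mset (transpose_edge \<alpha> \<beta> \<circ> slot_edge) (mset_set S)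
        = (\<Sum>i<K. \<Sum>t\<in>slot_pairs (s1 i) (s2 i). {#transpose_edge \<alpha> \<beta> (cycle_slot_edge \<alpha> \<beta> (Cs ! i) t)#})
          + (\<Sum>t\<in>slot_pairs (s1 K) (s2 K). {#transpose_edge \<alpha> \<beta> (me t)#})"
    by (simp_all add: slot_edge_def K_def)
  then have eq: "sum_list (map cycle_edges Cs') + I' + image_mset slot_edge (mset_set S)
      = sum_list (map cycle_edges Cs) + I + image_mset (transpose_edge \<alpha> \<beta> \<circ> slot_edge) (mset_set S)"
    using arg_cong2[OF Cs'(1) switch_I', of "(+)"] by (simp add: ac_simps K_def Cs'_def)
  show thesis by (rule that[OF _ _ I' eq]) (use Cs'(2,3) in \<open>simp_all add: Cs'_def K_def\<close>)
qed

lemma transposition_switch: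
  assumes switch_I: "T = {0,1} \<Longrightarrow>
      Isw + {#me 0, me 1#} = I + {#transpose_edge \<alpha> \<beta> (me 0), transpose_edge \<alpha> \<beta> (me 1)#}"
    and G: "G = sum_list (map cycle_edges Cs) + I"
    and bal: "filter_mset (crossing \<alpha> \<beta>) G + image_mset (transpose_edge \<alpha> \<beta>) Dd
      = image_mset (transpose_edge \<alpha> \<beta>) (filter_mset (crossing \<alpha> \<beta>) G) + Dd"
    and sub: "Dd \<subseteq># filter_mset (crossing \<alpha> \<beta>) G"
    and d0: "d0 \<in># Dd"
  obtains Cs' I' Xd where "Xd \<subseteq># Dd" "size Xd = 2" "d0 \<in># Xd" "\<forall>c\<in>set Cs'. is_cycle_list c"
    "map length Cs' = map length Cs" "I' = I \<or> (I' = Isw \<and> T = {0,1})"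
    "sum_list (map cycle_edges Cs') + I' + Xd = G + image_mset (transpose_edge \<alpha> \<beta>) Xd"
proof -
  let ?\<pi> = "transpose_edge \<alpha> \<beta>"
  have im: "image_mset slot_edge (mset_set slots) = filter_mset (crossing \<alpha> \<beta>) G"
    unfolding G by (rule image_slot_edge_slots)
  obtain D where D: "D \<subseteq> slots" "image_mset slot_edge (mset_set D) = Dd"
    using subseteq_image_mset_mset_set[OF finite_slots sub[folded im]] by blast
  have fD: "finite D" using D(1) finite_slots finite_subset by blast
  have "d0 \<in># image_mset slot_edge (mset_set D)" using d0 D(2) by simp
  then obtain d where d: "d \<in> D" "slot_edge d = d0" using fD by auto
  have "mset_set D \<subseteq># mset_set slots" using D(1) finite_slots by (rule subset_imp_msubset_mset_set)
  then have "image_mset slot_edge (mset_set (slots - D)) = filter_mset (crossing \<alpha> \<beta>) G - Dd"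
    by (simp add: mset_set_Diff[OF finite_slots D(1)] image_mset_Diff im D(2))
  also have "image_mset ?\<pi> \<dots> = \<dots>"
    using bal sub by (rule image_mset_diff_of_balance[rotated]) simp
  finally have balD: "image_mset ?\<pi> (image_mset slot_edge (mset_set (slots - D)))
      = image_mset slot_edge (mset_set (slots - D))" .
  have "\<forall>a\<in>slots. ?\<pi> (slot_edge a) \<noteq> slot_edge a"
    using crossing_slot_edge crossing_transpose_edge_neq by blast
  then obtain S where S: "S \<subseteq> slots" "d \<in> S" "\<forall>a\<in>S. partner_slot a \<in> S" "card (S \<inter> D) = 2"
    and balS: "image_mset ?\<pi> (image_mset slot_edge (mset_set (S - D))) = image_mset slot_edge (mset_set (S - D))"
    using involution_closed_subset[OF finite_slots D(1) d(1) pairing_on_slots _ _ balD] by auto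
  obtain Cs' I' where Cs': "\<forall>c\<in>set Cs'. is_cycle_list c" "map length Cs' = map length Cs"
    "I' = I \<or> (I' = Isw \<and> T = {0,1})"
    and eq: "sum_list (map cycle_edges Cs') + I' + image_mset slot_edge (mset_set S)
      = sum_list (map cycle_edges Cs) + I + image_mset (?\<pi> \<circ> slot_edge) (mset_set S)"
    by (rule switch_closed_slots[OF switch_I S(1,3)])
  define Xd where "Xd = image_mset slot_edge (mset_set (S \<inter> D))"
  have fS: "finite S" using S(1) finite_slots finite_subset by blast
  have split: "mset_set S = mset_set (S - D) + mset_set (S \<inter> D)"
    using fS by (metis Diff_disjoint Int_Diff_disjoint Un_Diff_Int finite_Diff finite_Int inf_commute mset_set_Union)
  have "(sum_list (map cycle_edges Cs') + I' + Xd) + image_mset slot_edge (mset_set (S - D))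
      = (G + image_mset ?\<pi> Xd) + image_mset slot_edge (mset_set (S - D))"
    using eq balS unfolding split Xd_def G by (simp add: multiset.map_comp ac_simps)
  then have "sum_list (map cycle_edges Cs') + I' + Xd = G + image_mset ?\<pi> Xd" by simp
  moreover have "Xd \<subseteq># Dd" unfolding Xd_def D(2)[symmetric]
    by (rule image_mset_subseteq_mono, rule subset_imp_msubset_mset_set) (use fD in auto)
  moreover have "size Xd = 2" "d0 \<in># Xd" using S(2,4) d fS by (auto simp: Xd_def)
  ultimately show thesis using Cs' that by blast
qed

end

lemma count_image_mset_involution:
  assumes "\<And>x. f (f x) = x"
  shows "count (image_mset f A) e = count A (f e)"
proof -
  have "f -` {e} = {f e}" using assms by force
  then show ?thesis by (cases "f e \<in># A") (auto simp: count_image_mset count_eq_zero_iff)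
qed

lemma finite_edges_Kn: "finite (edges_Kn n)"
proof -
  have "edges_Kn n \<subseteq> Pow {0..<n}" by (auto simp: edges_Kn_def)
  then show ?thesis by (rule finite_subset) auto
qed

lemma count_lamKn: "count (lamKn lam n) e = (if e \<in> edges_Kn n then lam else 0)"
  unfolding lamKn_def count_sum using finite_edges_Kn
  by (simp add: count_replicate_mset sum.delta)

lemma edges_Kn_iff: "e \<in> edges_Kn n \<longleftrightarrow> (\<exists>i j. i \<noteq> j \<and> i < n \<and> j < n \<and> e = {i, j})"
proof
  assume "e \<in> edges_Kn n"
  then obtain i j where "i < j" "j < n" "e = {i, j}" unfolding edges_Kn_def by blast
  then show "\<exists>i j. i \<noteq> j \<and> i < n \<and> j < n \<and> e = {i, j}" by (intro exI[of _ i] exI[of _ j]) auto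
next
  assume "\<exists>i j. i \<noteq> j \<and> i < n \<and> j < n \<and> e = {i, j}"
  then obtain i j where ij: "i \<noteq> j" "i < n" "j < n" "e = {i, j}" by blast
  then consider "i < j" | "j < i" by linarith
  then show "e \<in> edges_Kn n"
    by cases (use ij in \<open>auto simp: edges_Kn_def insert_commute\<close>)
qed

lemma in_lamKn_lt: "e \<in># lamKn lam n \<Longrightarrow> v \<in> e \<Longrightarrow> v < n"
  by (auto simp: count_lamKn edges_Kn_def simp flip: count_greater_zero_iff split: if_splits)

lemma transpose_edge_in_edges_Kn:
  assumes "\<alpha> < n" "\<beta> < n" "e \<in> edges_Kn n"
  shows "transpose_edge \<alpha> \<beta> e \<in> edges_Kn n"
proof -
  obtain i j where ij: "i \<noteq> j" "i < n" "j < n" "e = {i, j}" using assms(3) unfolding edges_Kn_iff by blast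
  then have "transpose \<alpha> \<beta> i \<noteq> transpose \<alpha> \<beta> j" "transpose \<alpha> \<beta> i < n" "transpose \<alpha> \<beta> j < n"
    using assms(1,2) by (auto simp: transpose_def transpose_eq_iff)
  then show ?thesis unfolding edges_Kn_iff using ij(4) by auto
qed

lemma image_transpose_edge_lamKn:
  assumes "\<alpha> < n" "\<beta> < n"
  shows "image_mset (transpose_edge \<alpha> \<beta>) (lamKn lam n) = lamKn lam n"
proof (rule multiset_eqI)
  fix e
  have "transpose_edge \<alpha> \<beta> e \<in> edges_Kn n \<longleftrightarrow> e \<in> edges_Kn n"
    using transpose_edge_in_edges_Kn[OF assms] transpose_edge_involutory by metis
  then show "count (image_mset (transpose_edge \<alpha> \<beta>) (lamKn lam n)) e = count (lamKn lam n) e"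
    by (simp add: count_image_mset_involution count_lamKn)
qed

lemma crossing_balance:
  assumes "G + L = lamKn lam n" "\<alpha> < n" "\<beta> < n"
  shows "filter_mset (crossing \<alpha> \<beta>) G + filter_mset (crossing \<alpha> \<beta>) L
    = image_mset (transpose_edge \<alpha> \<beta>) (filter_mset (crossing \<alpha> \<beta>) G)
      + image_mset (transpose_edge \<alpha> \<beta>) (filter_mset (crossing \<alpha> \<beta>) L)"
proof -
  have "filter_mset (crossing \<alpha> \<beta>) G + filter_mset (crossing \<alpha> \<beta>) L = filter_mset (crossing \<alpha> \<beta>) (lamKn lam n)"
    by (simp flip: assms(1))
  also have "\<dots> = image_mset (transpose_edge \<alpha> \<beta>) \<dots>"
    by (metis filter_crossing_image_transpose_edge image_transpose_edge_lamKn[OF assms(2,3)])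
  finally show ?thesis by (simp flip: assms(1))
qed

lemma perfect_matching_edge_at:
  assumes "perfect_matching n I" "v < n"
  obtains w where "filter_mset (\<lambda>e. v \<in> e) I = {#{v, w}#}" "w \<noteq> v" "w < n"
proof -
  have "size (filter_mset (\<lambda>e. v \<in> e) I) = 1" using assms by (simp add: perfect_matching_def deg_def)
  then obtain e where e: "filter_mset (\<lambda>e. v \<in> e) I = {#e#}" using size_1_singleton_mset by blast
  then have "e \<in># filter_mset (\<lambda>e. v \<in> e) I" by simp
  then have "e \<in># I" "v \<in> e" by simp_all
  then obtain i j where ij: "i \<noteq> j" "i < n" "j < n" "e = {i, j}"
    using assms(1) by (auto simp: perfect_matching_def)
  then show thesis using that e \<open>v \<in> e\<close> by (metis doubleton_eq_iff insertE singletonD)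
qed

lemma filter_crossing_conv:
  "filter_mset (crossing \<alpha> \<beta>) I =
   filter_mset (\<lambda>e. \<beta> \<notin> e) (filter_mset (\<lambda>e. \<alpha> \<in> e) I) + filter_mset (\<lambda>e. \<alpha> \<notin> e) (filter_mset (\<lambda>e. \<beta> \<in> e) I)"
  by (induction I) (auto simp: crossing_def)

text \<open>If the matching edges at $\alpha$ and $\beta$ differ, they are its only crossing edges, and
swapping their ends at $\alpha$ and $\beta$ gives a perfect matching again.\<close>

lemma perfect_matching_switch:
  assumes pm: "perfect_matching n I" and "\<alpha> < n" "\<beta> < n" "\<alpha> \<noteq> \<beta>"
  shows "\<exists>T me Isw. (T = {} \<or> T = {0::nat,1}) \<and> filter_mset (crossing \<alpha> \<beta>) I = (\<Sum>t\<in>T. {#me t#})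
    \<and> (T = {0,1} \<longrightarrow> Isw + {#me 0, me 1#} = I + {#transpose_edge \<alpha> \<beta> (me 0), transpose_edge \<alpha> \<beta> (me 1)#})
    \<and> perfect_matching n Isw"
proof -
  obtain va where va: "filter_mset (\<lambda>e. \<alpha> \<in> e) I = {#{\<alpha>, va}#}" "va \<noteq> \<alpha>" "va < n"
    using perfect_matching_edge_at[OF pm \<open>\<alpha> < n\<close>] by blast
  obtain vb where vb: "filter_mset (\<lambda>e. \<beta> \<in> e) I = {#{\<beta>, vb}#}" "vb \<noteq> \<beta>" "vb < n"
    using perfect_matching_edge_at[OF pm \<open>\<beta> < n\<close>] by blast
  have "{\<alpha>, va} \<in># filter_mset (\<lambda>e. \<alpha> \<in> e) I" "{\<beta>, vb} \<in># filter_mset (\<lambda>e. \<beta> \<in> e) I"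
    using va(1) vb(1) by simp_all
  then have e: "{\<alpha>, va} \<in># I" "{\<beta>, vb} \<in># I" by simp_all
  show ?thesis
  proof (cases "va = \<beta>")
    case True
    then have "{\<alpha>, \<beta>} \<in># filter_mset (\<lambda>e. \<beta> \<in> e) I" using e by simp
    then have "vb = \<alpha>" using vb(1,2) by (auto simp: doubleton_eq_iff)
    then have "filter_mset (crossing \<alpha> \<beta>) I = {#}"
      using va vb True by (simp add: filter_crossing_conv insert_commute)
    then show ?thesis using pm by (intro exI[of _ "{}"] exI[of _ "\<lambda>_. {}"] exI[of _ I]) simp
  next
    case False
    have vba: "vb \<noteq> \<alpha>"
    proof
      assume "vb = \<alpha>"
      then have "{\<beta>, \<alpha>} \<in># filter_mset (\<lambda>e. \<alpha> \<in> e) I" using e by simp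
      then show False using va(1) False by (auto simp: doubleton_eq_iff)
    qed
    define me where "me = (\<lambda>t::nat. if t = 0 then {\<alpha>, va} else {\<beta>, vb})"
    have ne: "{\<alpha>, va} \<noteq> {\<beta>, vb}" using \<open>\<alpha> \<noteq> \<beta>\<close> vba by (auto simp: doubleton_eq_iff)
    then have "{#{\<alpha>, va}, {\<beta>, vb}#} \<subseteq># I" using e by (simp add: insert_subset_eq_iff in_diff_count)
    then obtain I0 where I0: "I = I0 + {#{\<alpha>, va}, {\<beta>, vb}#}" by (metis subset_mset.diff_add)
    define Isw where "Isw = I0 + {#{\<beta>, va}, {\<alpha>, vb}#}"
    have "transpose \<alpha> \<beta> va = va" "transpose \<alpha> \<beta> vb = vb" using va vb False vba by auto
    then have sw: "Isw + {#me 0, me 1#} = I + {#transpose_edge \<alpha> \<beta> (me 0), transpose_edge \<alpha> \<beta> (me 1)#}"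
      by (simp add: Isw_def I0 me_def add_mset_commute)
    have fc: "filter_mset (crossing \<alpha> \<beta>) I = (\<Sum>t\<in>{0,1}. {#me t#})"
      using va vb False vba \<open>\<alpha> \<noteq> \<beta>\<close> by (simp add: filter_crossing_conv me_def)
    have pm_sw: "perfect_matching n Isw"
      unfolding perfect_matching_def
    proof
      have "\<forall>e\<in>#I0. \<exists>i j. i \<noteq> j \<and> i < n \<and> j < n \<and> e = {i, j}"
        using pm by (simp add: perfect_matching_def I0)
      moreover have "\<beta> \<noteq> va" "\<alpha> \<noteq> vb" using False vba by auto
      ultimately show "\<forall>e\<in>#Isw. \<exists>i j. i \<noteq> j \<and> i < n \<and> j < n \<and> e = {i, j}"
        unfolding Isw_def using va(3) vb(3) \<open>\<alpha> < n\<close> \<open>\<beta> < n\<close> by simp blast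
      have "deg Isw v = deg I v" for v using va(2) vb(2) vba False unfolding Isw_def I0 by auto
      then show "\<forall>v<n. deg Isw v = 1" using pm by (simp add: perfect_matching_def)
    qed
    show ?thesis using fc sw pm_sw by (intro exI[of _ "{0,1}"] exI[of _ me] exI[of _ Isw]) simp
  qed
qed

lemma mset_map_remove_two:
  assumes "i < length Cs" "j < length Cs" "i \<noteq> j"
  shows "mset (map h Cs) = {#h (Cs ! i), h (Cs ! j)#} + mset (map h (map ((!) Cs) (filter (\<lambda>k. k \<noteq> i \<and> k \<noteq> j) [0..<length Cs])))"
proof -
  let ?P = "\<lambda>k. k \<noteq> i \<and> k \<noteq> j"
  have u: "mset [0..<length Cs] = filter_mset ?P (mset [0..<length Cs]) + filter_mset (\<lambda>k. \<not> ?P k) (mset [0..<length Cs])"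
    by (rule multiset_partition)
  have "filter_mset (\<lambda>k. \<not> ?P k) (mset [0..<length Cs]) = mset_set {k \<in> {0..<length Cs}. \<not> ?P k}"
    by (simp add: filter_mset_mset_set)
  also have "{k \<in> {0..<length Cs}. \<not> ?P k} = {i, j}" using assms by auto
  also have "mset_set {i, j} = {#i, j#}" using assms by simp
  finally have u2: "mset [0..<length Cs] = {#i, j#} + mset (filter ?P [0..<length Cs])"
    using u by (simp add: mset_filter)
  have "mset (map h Cs) = mset (map (h \<circ> (!) Cs) [0..<length Cs])"
    by (metis map_map map_nth)
  also have "\<dots> = image_mset (h \<circ> (!) Cs) (mset [0..<length Cs])" by simp
  also have "\<dots> = {#h (Cs ! i), h (Cs ! j)#} + mset (map h (map ((!) Cs) (filter ?P [0..<length Cs])))"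
    unfolding u2 by simp
  finally show ?thesis .
qed

lemma pairwise_meet_remove_two:
  assumes x: "\<forall>i<length Cs. \<forall>j<length Cs. i \<noteq> j \<longrightarrow> set (Cs ! i) \<inter> set (Cs ! j) = {x}"
    and ij: "i < length Cs" "j < length Cs" "i \<noteq> j"
  defines "Rest \<equiv> map ((!) Cs) (filter (\<lambda>k. k \<noteq> i \<and> k \<noteq> j) [0..<length Cs])"
  shows "\<forall>c\<in>set Rest. c \<in> set Cs \<and> set c \<inter> set (Cs ! i) = {x} \<and> set c \<inter> set (Cs ! j) = {x}"
    and "\<forall>a<length Rest. \<forall>b<length Rest. a \<noteq> b \<longrightarrow> set (Rest ! a) \<inter> set (Rest ! b) = {x}"
proof -
  define idx where "idx = filter (\<lambda>k. k \<noteq> i \<and> k \<noteq> j) [0..<length Cs]"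
  have idx: "idx ! a < length Cs \<and> idx ! a \<noteq> i \<and> idx ! a \<noteq> j" if "a < length idx" for a
    using nth_mem[OF that] by (auto simp: idx_def)
  show "\<forall>c\<in>set Rest. c \<in> set Cs \<and> set c \<inter> set (Cs ! i) = {x} \<and> set c \<inter> set (Cs ! j) = {x}"
  proof
    fix c assume "c \<in> set Rest"
    then obtain a where a: "a < length idx" "c = Cs ! (idx ! a)"
      by (auto simp: Rest_def idx_def[symmetric] in_set_conv_nth)
    then show "c \<in> set Cs \<and> set c \<inter> set (Cs ! i) = {x} \<and> set c \<inter> set (Cs ! j) = {x}"
      using x ij idx[OF a(1)] by auto
  qed
  show "\<forall>a<length Rest. \<forall>b<length Rest. a \<noteq> b \<longrightarrow> set (Rest ! a) \<inter> set (Rest ! b) = {x}"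
  proof (intro allI impI)
    fix a b assume ab: "a < length Rest" "b < length Rest" "a \<noteq> b"
    have "idx ! a \<noteq> idx ! b" using ab by (simp add: Rest_def nth_eq_iff_index_eq idx_def)
    then show "set (Rest ! a) \<inter> set (Rest ! b) = {x}" using x idx ab by (simp add: Rest_def idx_def[symmetric])
  qed
qed

lemma flower_split:
  assumes fl: "is_flower (M' + {#int m, 2#}) L" and m3: "m \<ge> 3"
  shows "\<exists>x A y Rest. L = cycle_edges (x # A) + cycle_edges [x, y] + sum_list (map cycle_edges Rest)
     \<and> length A + 1 = m \<and> distinct (x # A) \<and> y \<notin> set (x # A)
     \<and> (\<forall>c\<in>set Rest. is_cycle_list c) \<and> mset (map (\<lambda>vs. int (length vs)) Rest) = M'
     \<and> (\<forall>c\<in>set Rest. set c \<inter> set (x # A) = {x} \<and> y \<notin> set c \<and> x \<in> set c)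
     \<and> (\<forall>i<length Rest. \<forall>j<length Rest. i \<noteq> j \<longrightarrow> set (Rest ! i) \<inter> set (Rest ! j) = {x})"
proof -
  obtain Cs where Cs: "Cs \<noteq> []" "\<forall>vs\<in>set Cs. is_cycle_list vs"
    "mset (map (\<lambda>vs. int (length vs)) Cs) = M' + {#int m, 2#}" "L = sum_list (map cycle_edges Cs)"
    "length Cs \<ge> 2 \<longrightarrow> (\<exists>x. \<forall>i<length Cs. \<forall>j<length Cs. i \<noteq> j \<longrightarrow> set (Cs ! i) \<inter> set (Cs ! j) = {x})"
    using fl unfolding is_flower_def by blast
  have "int m \<in># mset (map (\<lambda>vs. int (length vs)) Cs)" using Cs(3) by simp
  then obtain i where i: "i < length Cs" "int (length (Cs ! i)) = int m"
    by (auto simp: in_set_conv_nth)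
  have "2 \<in># mset (map (\<lambda>vs. int (length vs)) Cs)" using Cs(3) by simp
  then obtain j where j: "j < length Cs" "int (length (Cs ! j)) = 2"
    by (auto simp: in_set_conv_nth)
  have li: "length (Cs ! i) = m" using i by simp
  have lj: "length (Cs ! j) = 2" using j by simp
  have ij: "i \<noteq> j" using li lj m3 by auto
  have "length Cs \<ge> 2" using i j ij by linarith
  then obtain x where x: "\<forall>i<length Cs. \<forall>j<length Cs. i \<noteq> j \<longrightarrow> set (Cs ! i) \<inter> set (Cs ! j) = {x}"
    using Cs(5) by blast
  define idx where "idx = filter (\<lambda>k. k \<noteq> i \<and> k \<noteq> j) [0..<length Cs]"
  define Rest where "Rest = map ((!) Cs) idx"
  have msplit: "\<And>h. mset (map h Cs) = {#h (Cs ! i), h (Cs ! j)#} + mset (map h Rest)"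
    using mset_map_remove_two[OF i(1) j(1) ij] by (simp add: Rest_def idx_def)
  have Lsplit: "L = cycle_edges (Cs ! i) + cycle_edges (Cs ! j) + sum_list (map cycle_edges Rest)"
  proof -
    have "L = sum_mset (mset (map cycle_edges Cs))" using Cs(4) by (simp only: sum_mset_sum_list)
    also have "\<dots> = cycle_edges (Cs ! i) + cycle_edges (Cs ! j) + sum_mset (mset (map cycle_edges Rest))"
      unfolding msplit by simp
    finally show ?thesis by (simp only: sum_mset_sum_list)
  qed
  have Mlen: "mset (map (\<lambda>vs. int (length vs)) Rest) = M'"
    using Cs(3) msplit[of "\<lambda>vs. int (length vs)"] li lj by (simp add: add_mset_commute)
  have xij: "set (Cs ! i) \<inter> set (Cs ! j) = {x}" using x i j ij by auto
  have ci: "is_cycle_list (Cs ! i)" "is_cycle_list (Cs ! j)" using Cs(2) i j by auto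
  have xi: "x \<in> set (Cs ! i)" using xij by auto
  obtain xs ys where cixs: "Cs ! i = xs @ x # ys" using split_list[OF xi] by blast
  define A where "A = ys @ xs"
  have ceA: "cycle_edges (x # A) = cycle_edges (Cs ! i)" using cixs cycle_edges_append_Cons by (simp add: A_def)
  have setA: "set (x # A) = set (Cs ! i)" using cixs by (auto simp: A_def)
  have dA: "distinct (x # A)" using ci(1) cixs by (auto simp: A_def is_cycle_list_def)
  have lA: "length A + 1 = m" using li cixs by (simp add: A_def)
  obtain p q where pq: "Cs ! j = [p, q]" using lj
    by (metis One_nat_def Suc_1 length_0_conv length_Suc_conv)
  have pqd: "p \<noteq> q" using ci(2) pq by (auto simp: is_cycle_list_def)
  have xpq: "x = p \<or> x = q" using xij pq by auto
  obtain y where y: "cycle_edges (Cs ! j) = cycle_edges [x, y]" "set (Cs ! j) = {x, y}" "y \<noteq> x"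
  proof (cases "x = p")
    case True then show ?thesis using that[of q] pq pqd by auto
  next
    case False then have "x = q" using xpq by auto
    then show ?thesis using that[of p] pq pqd by (auto simp: cycle_edges_pair insert_commute)
  qed
  have ynA: "y \<notin> set (x # A)" using xij y setA by auto
  note Rest = pairwise_meet_remove_two[OF x i(1) j(1) ij, folded idx_def Rest_def]
  have restc: "\<forall>c\<in>set Rest. is_cycle_list c" using Rest(1) Cs(2) by blast
  have restx: "\<forall>c\<in>set Rest. set c \<inter> set (x # A) = {x} \<and> y \<notin> set c \<and> x \<in> set c"
    using Rest(1) setA y(2,3) by auto
  show ?thesis
    using Lsplit ceA y(1) lA dA ynA restc Mlen restx Rest(2) by (intro exI[of _ x] exI[of _ A] exI[of _ y] exI[of _ Rest]) auto
qed

lemma is_flower_Cons: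
  assumes "is_cycle_list C" "\<forall>c\<in>set Rest. is_cycle_list c \<and> set c \<inter> set C = {x}"
    "\<forall>i<length Rest. \<forall>j<length Rest. i \<noteq> j \<longrightarrow> set (Rest ! i) \<inter> set (Rest ! j) = {x}"
    "mset (map (\<lambda>vs. int (length vs)) Rest) = M'"
  shows "is_flower (M' + {#int (length C)#}) (cycle_edges C + sum_list (map cycle_edges Rest))"
  unfolding is_flower_def
proof (rule exI[of _ "C # Rest"], intro conjI)
  show "C # Rest \<noteq> []" by simp
  show "cycle_edges C + sum_list (map cycle_edges Rest) = sum_list (map cycle_edges (C # Rest))" by simp
  show "\<forall>vs\<in>set (C # Rest). is_cycle_list vs" using assms by auto
  show "mset (map (\<lambda>vs. int (length vs)) (C # Rest)) = M' + {#int (length C)#}" using assms by simp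
  show "2 \<le> length (C # Rest) \<longrightarrow> (\<exists>x. \<forall>i<length (C # Rest). \<forall>j<length (C # Rest). i \<noteq> j \<longrightarrow> set ((C # Rest) ! i) \<inter> set ((C # Rest) ! j) = {x})"
  proof (rule impI, rule exI[of _ x], intro allI impI)
    fix i j assume i: "i < length (C # Rest)" and j: "j < length (C # Rest)" and ij: "i \<noteq> j"
    have h: "\<forall>k<length Rest. set (Rest ! k) \<inter> set C = {x}" using assms(2) nth_mem by blast
    show "set ((C # Rest) ! i) \<inter> set ((C # Rest) ! j) = {x}"
    proof (cases i)
      case 0
      then obtain j' where Suc: "j = Suc j'" using ij by (cases j) auto
      then have "set (Rest ! j') \<inter> set C = {x}" using h j by auto
      then show ?thesis using 0 Suc by (simp add: Int_commute)
    next
      case (Suc i')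
      show ?thesis
      proof (cases j)
        case 0
        then show ?thesis using h i Suc by auto
      next
        case (Suc j')
        then show ?thesis using \<open>i = Suc i'\<close> i j ij assms(3) by auto
      qed
    qed
  qed
qed

lemma subseteq_of_balance:
  assumes "A + B = C + D" "\<forall>x\<in>#D. x \<notin># B"
  shows "D \<subseteq># A"
proof (rule mset_subset_eqI)
  fix x
  have "count A x + count B x = count C x + count D x" using assms(1) by (metis count_union)
  moreover have "count D x = 0 \<or> count B x = 0" using assms(2) by (simp add: count_eq_zero_iff)
  ultimately show "count D x \<le> count A x" by linarith
qed

lemma packing_with_leave_iff:
  assumes "n > 0"
  shows "packing_with_leave lam n M L \<longleftrightarrow>
    (\<exists>Cs I. (\<forall>c\<in>set Cs. is_cycle_list c) \<and> mset (map (\<lambda>vs. int (length vs)) Cs) = M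
      \<and> (if even (lam * (n - 1)) then I = {#} else perfect_matching n I)
      \<and> sum_list (map cycle_edges Cs) + I + L = lamKn lam n)"
    (is "?P \<longleftrightarrow> (\<exists>Cs I. ?D Cs I)")
proof
  assume ?P
  then obtain G where G: "G + L = lamKn lam n"
    and par: "if even (lam * (n - 1)) then \<forall>v<n. even (deg G v) else \<forall>v<n. odd (deg G v)"
    and dec: "M_decomposition n M G"
    unfolding packing_with_leave_def by (metis subset_mset.add_diff_inverse)
  have par0: "even (lam * (n - 1)) \<longleftrightarrow> even (deg G 0)" using par assms by (auto split: if_splits)
  from dec show "\<exists>Cs I. ?D Cs I"
    unfolding M_decomposition_def
  proof (elim disjE exE conjE)
    fix Cs assume "\<forall>v<n. even (deg G v)" "\<forall>vs\<in>set Cs. is_cycle_list vs"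
      "mset (map (\<lambda>vs. int (length vs)) Cs) = M" "G = sum_list (map cycle_edges Cs)"
    then show "\<exists>Cs I. ?D Cs I" using G par0 assms by (intro exI[of _ Cs] exI[of _ "{#}"]) auto
  next
    fix Cs I assume "\<forall>v<n. odd (deg G v)" "\<forall>vs\<in>set Cs. is_cycle_list vs"
      "mset (map (\<lambda>vs. int (length vs)) Cs) = M" "perfect_matching n I" "G = sum_list (map cycle_edges Cs) + I"
    then show "\<exists>Cs I. ?D Cs I" using G par0 assms by (intro exI[of _ Cs] exI[of _ I]) auto
  qed
next
  assume "\<exists>Cs I. ?D Cs I"
  then obtain Cs I where Cs: "\<forall>c\<in>set Cs. is_cycle_list c" "mset (map (\<lambda>vs. int (length vs)) Cs) = M"
    and I: "if even (lam * (n - 1)) then I = {#} else perfect_matching n I"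
    and GL: "sum_list (map cycle_edges Cs) + I + L = lamKn lam n" by blast
  define G where "G = sum_list (map cycle_edges Cs) + I"
  have even_G: "even (deg G v) \<longleftrightarrow> even (deg I v)" for v
    using even_deg_cycles[OF Cs(1), of v] by (simp add: G_def)
  have par: "if even (lam * (n - 1)) then \<forall>v<n. even (deg G v) else \<forall>v<n. odd (deg G v)"
  proof (cases "even (lam * (n - 1))")
    case True
    then show ?thesis using I by (simp add: even_G)
  next
    case False
    then have "perfect_matching n I" using I by simp
    then show ?thesis using False by (simp add: even_G perfect_matching_def)
  qed
  show ?P unfolding packing_with_leave_def M_decomposition_def
  proof (intro exI[of _ G] conjI)
    show "G \<subseteq># lamKn lam n" unfolding GL[symmetric] G_def by (rule mset_subset_eq_add_left)
    show "L = lamKn lam n - G" unfolding GL[symmetric] G_def by (rule add_diff_cancel_left'[symmetric])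
    show "if even (lam * (n - 1)) then \<forall>v<n. even (deg G v) else \<forall>v<n. odd (deg G v)" by (rule par)
    show "(\<forall>v<n. even (deg G v)) \<and> (\<exists>Cs. (\<forall>vs\<in>set Cs. is_cycle_list vs)
          \<and> mset (map (\<lambda>vs. int (length vs)) Cs) = M \<and> G = sum_list (map cycle_edges Cs))
      \<or> (\<forall>v<n. odd (deg G v)) \<and> (\<exists>Cs I. (\<forall>vs\<in>set Cs. is_cycle_list vs)
          \<and> mset (map (\<lambda>vs. int (length vs)) Cs) = M \<and> perfect_matching n I
          \<and> G = sum_list (map cycle_edges Cs) + I)"
    proof (cases "even (lam * (n - 1))")
      case True
      then have "I = {#}" using I by simp
      then show ?thesis using True par Cs by (intro disjI1 conjI exI[of _ Cs]) (simp_all add: G_def)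
    next
      case False
      then have "perfect_matching n I" using I by simp
      then show ?thesis using False par Cs
        by (intro disjI2 conjI exI[of _ Cs] exI[of _ I]) (simp_all add: G_def)
    qed
  qed
qed

lemma packing_with_leave_add_cycle:
  assumes "packing_with_leave lam n M (cycle_edges C + L)" "is_cycle_list C" "n > 0"
  shows "packing_with_leave lam n (M + {#int (length C)#}) L"
proof -
  obtain Cs I where "\<forall>c\<in>set Cs. is_cycle_list c" "mset (map (\<lambda>vs. int (length vs)) Cs) = M"
    "if even (lam * (n - 1)) then I = {#} else perfect_matching n I"
    "sum_list (map cycle_edges Cs) + I + (cycle_edges C + L) = lamKn lam n"
    using assms(1) unfolding packing_with_leave_iff[OF assms(3)] by blast
  then show ?thesis unfolding packing_with_leave_iff[OF assms(3)] using assms(2)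
    by (intro exI[of _ "C # Cs"] exI[of _ I]) (auto simp: ac_simps)
qed

lemma packing_with_leave_vertex_lt:
  assumes "packing_with_leave lam n M L" "e \<in># L" "v \<in> e"
  shows "v < n"
proof -
  have "L \<subseteq># lamKn lam n" using assms(1) by (auto simp: packing_with_leave_def)
  then show ?thesis using assms(2,3) in_lamKn_lt by (metis mset_subset_eqD)
qed

lemma matching_switch:
  assumes I: "if even (lam * (n - 1)) then I = {#} else perfect_matching n I"
    and "\<alpha> < n" "\<beta> < n" "\<alpha> \<noteq> \<beta>"
  shows "\<exists>T me Isw. (T = {} \<or> T = {0::nat,1}) \<and> filter_mset (crossing \<alpha> \<beta>) I = (\<Sum>t\<in>T. {#me t#})
    \<and> (T = {0,1} \<longrightarrow> Isw + {#me 0, me 1#} = I + {#transpose_edge \<alpha> \<beta> (me 0), transpose_edge \<alpha> \<beta> (me 1)#})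
    \<and> (if even (lam * (n - 1)) then T = {} else perfect_matching n Isw)"
proof (cases "even (lam * (n - 1))")
  case True
  then show ?thesis using I by (intro exI[of _ "{}"]) simp
next
  case False
  then show ?thesis using perfect_matching_switch[OF _ assms(2-4)] I by simp
qed

lemma packing_with_leave_switch:
  assumes P: "packing_with_leave lam n M L" and n: "n > 0" and ab: "\<alpha> < n" "\<beta> < n" "\<alpha> \<noteq> \<beta>"
    and disj: "\<forall>e\<in>#filter_mset (crossing \<alpha> \<beta>) L. transpose_edge \<alpha> \<beta> e \<notin># filter_mset (crossing \<alpha> \<beta>) L"
    and e: "e \<in># filter_mset (crossing \<alpha> \<beta>) L"
  obtains X L' where "X \<subseteq># filter_mset (crossing \<alpha> \<beta>) L" "size X = 2" "e \<in># X"
    "L' + X = L + image_mset (transpose_edge \<alpha> \<beta>) X" "packing_with_leave lam n M L'"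
proof -
  let ?\<pi> = "transpose_edge \<alpha> \<beta>" and ?QL = "filter_mset (crossing \<alpha> \<beta>) L"
  obtain Cs0 I where Cs0: "\<forall>c\<in>set Cs0. is_cycle_list c" "mset (map (\<lambda>vs. int (length vs)) Cs0) = M"
    and I: "if even (lam * (n - 1)) then I = {#} else perfect_matching n I"
    and GL: "sum_list (map cycle_edges Cs0) + I + L = lamKn lam n"
    using P unfolding packing_with_leave_iff[OF n] by blast
  obtain Cs where Cs: "\<forall>c\<in>set Cs. is_cycle_list c \<and> normalized \<alpha> \<beta> c" "map length Cs = map length Cs0"
    "sum_list (map cycle_edges Cs) = sum_list (map cycle_edges Cs0)"
    by (rule normalize_cycles[OF Cs0(1)])
  define G where "G = sum_list (map cycle_edges Cs) + I"
  obtain T me Isw where T: "T = {} \<or> T = {0::nat,1}" "filter_mset (crossing \<alpha> \<beta>) I = (\<Sum>t\<in>T. {#me t#})"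
    and switch_I: "T = {0,1} \<longrightarrow> Isw + {#me 0, me 1#} = I + {#?\<pi> (me 0), ?\<pi> (me 1)#}"
    and Isw: "if even (lam * (n - 1)) then T = {} else perfect_matching n Isw"
    using matching_switch[OF I ab] by blast
  have "image_mset ?\<pi> (image_mset ?\<pi> ?QL) = ?QL" by (simp add: multiset.map_comp comp_def)
  then have bal: "filter_mset (crossing \<alpha> \<beta>) G + image_mset ?\<pi> (image_mset ?\<pi> ?QL)
      = image_mset ?\<pi> (filter_mset (crossing \<alpha> \<beta>) G) + image_mset ?\<pi> ?QL"
    using crossing_balance[of G L lam n, OF _ ab(1,2)] GL Cs(3) by (simp add: G_def)
  have sub: "image_mset ?\<pi> ?QL \<subseteq># filter_mset (crossing \<alpha> \<beta>) G"
    by (rule subseteq_of_balance[OF bal]) (use disj in auto)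
  have "?\<pi> e \<in># image_mset ?\<pi> ?QL" using e by simp
  from transposition_switch[OF ab(3) Cs(1) T switch_I[rule_format] G_def bal sub this]
  obtain Cs' I' Xd where Xd: "Xd \<subseteq># image_mset ?\<pi> ?QL" "size Xd = 2" "?\<pi> e \<in># Xd"
    and Cs': "\<forall>c\<in>set Cs'. is_cycle_list c" "map length Cs' = map length Cs" "I' = I \<or> (I' = Isw \<and> T = {0,1})"
    and eq: "sum_list (map cycle_edges Cs') + I' + Xd = G + image_mset ?\<pi> Xd" .
  have I': "if even (lam * (n - 1)) then I' = {#} else perfect_matching n I'"
    using Cs'(3) I Isw by (cases "even (lam * (n - 1))") auto
  define X where "X = image_mset ?\<pi> Xd"
  have X: "X \<subseteq># ?QL" "size X = 2" "e \<in># X" "image_mset ?\<pi> X = Xd"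
    using image_mset_subseteq_mono[OF Xd(1), of ?\<pi>] Xd(2,3) image_eqI[OF _ Xd(3), of e ?\<pi>]
    by (auto simp: X_def multiset.map_comp comp_def)
  define L' where "L' = L - X + Xd"
  have "X \<subseteq># L" using X(1) by (meson multiset_filter_subset subset_mset.order_trans)
  then have L': "L' + X = L + image_mset ?\<pi> X"
    unfolding L'_def X(4) using subset_mset.diff_add by (metis add.assoc add.commute)
  have "sum_list (map cycle_edges Cs') + I' + L' + X = sum_list (map cycle_edges Cs') + I' + (L' + X)"
    by (simp only: add.assoc)
  also have "\<dots> = (sum_list (map cycle_edges Cs') + I' + Xd) + L"
    unfolding L' X(4) by (simp only: ac_simps)
  also have "\<dots> = (sum_list (map cycle_edges Cs0) + I + L) + X"
    unfolding eq G_def Cs(3) X_def by (simp only: ac_simps)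
  finally have lamKn: "sum_list (map cycle_edges Cs') + I' + L' = lamKn lam n"
    using GL add_right_cancel by metis
  have "map (\<lambda>vs. int (length vs)) Cs' = map int (map length Cs')" by simp
  also have "\<dots> = map (\<lambda>vs. int (length vs)) Cs0" using Cs(2) Cs'(2) by simp
  finally have "mset (map (\<lambda>vs. int (length vs)) Cs') = M" using Cs0(2) by simp
  then have "packing_with_leave lam n M L'"
    unfolding packing_with_leave_iff[OF n] using Cs'(1) I' lamKn by blast
  then show thesis by (rule that[OF X(1-3) L'])
qed

lemma long_cycle_switch:
  assumes P: "packing_with_leave lam n M (cycle_edges (x # a1 # a2 # a3 # R) + cycle_edges [x, y] + H)"
    and n: "n > 0" and dist: "distinct (x # a1 # a2 # a3 # R)" "y \<notin> set (x # a1 # a2 # a3 # R)"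
    and H: "filter_mset (crossing y a2) H = {#}"
  obtains T C where "packing_with_leave lam n M (cycle_edges T + (cycle_edges C + H))"
    "is_cycle_list T" "length T = 3" "is_cycle_list C" "length C = length R + 3" "x \<in> set C"
    "set C \<subseteq> insert y (set (x # a1 # a2 # a3 # R))"
proof -
  note result = that
  let ?\<pi> = "transpose_edge y a2"
  define L where "L = cycle_edges (x # a1 # a2 # a3 # R) + cycle_edges [x, y] + H"
  have ce: "cycle_edges (x # a1 # a2 # a3 # R)
      = add_mset {x, a1} (add_mset {a1, a2} (add_mset {a2, a3} (path_edges (a3 # R @ [x]))))"
    by (simp add: cycle_edges_Cons)
  have "{x, y} \<in># L" "{a1, a2} \<in># L" by (simp_all add: L_def ce cycle_edges_pair)
  then have yn: "y < n" "a2 < n" using packing_with_leave_vertex_lt[OF P[folded L_def]] by blast+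
  have neq: "x \<noteq> a1" "x \<noteq> a2" "x \<noteq> a3" "a1 \<noteq> a2" "a2 \<noteq> a3" "a1 \<noteq> a3"
    "y \<noteq> x" "y \<noteq> a1" "y \<noteq> a2" "y \<noteq> a3"
    using dist by auto
  have fix_vertices: "transpose y a2 x = x" "transpose y a2 a1 = a1" "transpose y a2 a3 = a3"
    using dist by auto
  have path: "filter_mset (crossing y a2) (path_edges (a3 # R @ [x])) = {#}"
    using dist by (intro filter_crossing_path_edges) auto
  have QL: "filter_mset (crossing y a2) L = {#{a1, a2}, {a2, a3}, {x, y}, {x, y}#}"
    unfolding L_def filter_union_mset H ce using neq by (simp add: path cycle_edges_pair crossing_def)
  have disj: "\<forall>e\<in>#filter_mset (crossing y a2) L. ?\<pi> e \<notin># filter_mset (crossing y a2) L"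
    using dist fix_vertices by (auto simp: QL doubleton_eq_iff)
  have "y \<noteq> a2" "{x, y} \<in># filter_mset (crossing y a2) L" using dist by (simp_all add: QL)
  from packing_with_leave_switch[OF P[folded L_def] n yn this(1) disj this(2)]
  obtain X L' where X: "X \<subseteq># filter_mset (crossing y a2) L" "size X = 2" "{x, y} \<in># X"
    and L': "L' + X = L + image_mset ?\<pi> X" "packing_with_leave lam n M L'" .
  obtain z where Xz: "X = {#{x, y}, z#}" and z: "z = {x, y} \<or> z = {a1, a2} \<or> z = {a2, a3}"
  proof -
    obtain X1 where X1: "X = add_mset {x, y} X1" using X(3) by (metis multi_member_split)
    have "size X1 = 1" using X(2) X1 by simp
    then obtain z where z: "X1 = {#z#}" using size_1_singleton_mset by blast
    have "z \<in># {#{a1, a2}, {a2, a3}, {x, y}#}" using X(1) X1 z by (simp add: QL add_mset_commute)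
    then show thesis using that X1 z by auto
  qed
  have finish: thesis if "is_cycle_list T" "length T = 3" "is_cycle_list C" "length C = length R + 3" "x \<in> set C"
    "set C \<subseteq> insert y (set (x # a1 # a2 # a3 # R))"
    and "cycle_edges T + (cycle_edges C + H) + X = L + image_mset ?\<pi> X" for T C
  proof -
    have "L' = cycle_edges T + (cycle_edges C + H)" using L'(1) that(7) by (metis add_right_cancel)
    then show thesis using L'(2) that(1-6) by (intro result) auto
  qed
  have cycles: "is_cycle_list [x, a1, a2]" "is_cycle_list [x, y, a1]"
    "is_cycle_list (x # a2 # a3 # R)" "is_cycle_list (x # y # a3 # R)"
    using dist by (auto simp: is_cycle_list_def)
  from z show thesis
  proof (elim disjE)
    assume "z = {x, y}"
    then show thesis
      by (intro finish[of "[x, a1, a2]" "x # a2 # a3 # R"]) (use cycles in \<open>simp_all add: L_def ce Xz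
          cycle_edges_Cons cycle_edges_pair fix_vertices, auto simp: insert_commute add_mset_commute\<close>)
  next
    assume "z = {a1, a2}"
    then show thesis
      by (intro finish[of "[x, y, a1]" "x # a2 # a3 # R"]) (use cycles in \<open>simp_all add: L_def ce Xz
          cycle_edges_Cons cycle_edges_pair fix_vertices, auto simp: insert_commute add_mset_commute\<close>)
  next
    assume "z = {a2, a3}"
    then show thesis
      by (intro finish[of "[x, a1, a2]" "x # y # a3 # R"]) (use cycles in \<open>simp_all add: L_def ce Xz
          cycle_edges_Cons cycle_edges_pair fix_vertices, auto simp: insert_commute add_mset_commute\<close>)
  qed
qed

lemma packing_leave_split_triangle:
  assumes P: "packing_with_leave lam n M (cycle_edges (x # A) + cycle_edges [x, y] + H)" and n: "n > 0"
    and A: "length A \<ge> 2" "distinct (x # A)" "y \<notin> set (x # A)"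
    and H: "\<forall>e\<in>#H. e \<inter> insert y (set A) = {}"
  obtains T C where "packing_with_leave lam n M (cycle_edges T + (cycle_edges C + H))"
    "is_cycle_list T" "length T = 3" "is_cycle_list C" "length C = length A" "x \<in> set C"
    "set C \<subseteq> insert y (set (x # A))"
proof (cases "length A = 2")
  case True
  then obtain a1 a2 where "A = [a1, a2]" by (auto simp: length_Suc_conv numeral_2_eq_2)
  then show thesis using that[of "x # A" "[x, y]"] P A by (simp add: is_cycle_list_def ac_simps)
next
  case False
  then have "length A \<ge> 3" using A(1) by linarith
  then obtain a1 a2 a3 R where A': "A = a1 # a2 # a3 # R" by (auto simp: Suc_le_length_iff numeral_3_eq_3)
  have "filter_mset (crossing y a2) H = {#}" using H by (auto simp: filter_mset_eq_conv crossing_def A')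
  from long_cycle_switch[OF P[unfolded A'] n A(2,3)[unfolded A'] this]
  obtain T C where "packing_with_leave lam n M (cycle_edges T + (cycle_edges C + H))"
    "is_cycle_list T" "length T = 3" "is_cycle_list C" "length C = length R + 3" "x \<in> set C"
    "set C \<subseteq> insert y (set (x # a1 # a2 # a3 # R))" .
  then show thesis using that[of T C] A' by simp
qed

theorem mainTheorem9:
  fixes M M' :: "int multiset" and lam n m :: nat
  assumes "lam > 0" and "n > 0" and "m \<ge> 3"
    and "\<exists>L. packing_with_leave lam n M L \<and> leave_is_flower (M' + {#int m, 2#}) L"
  shows "\<exists>L. packing_with_leave lam n (M + {#3#}) L \<and> leave_is_flower (M' + {#int m - 1#}) L"
proof -
  obtain L where P: "packing_with_leave lam n M L" and F: "is_flower (M' + {#int m, 2#}) L"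
    using assms(4) unfolding leave_is_flower_def by blast
  obtain x A y Rest where L: "L = cycle_edges (x # A) + cycle_edges [x, y] + sum_list (map cycle_edges Rest)"
    and A: "length A + 1 = m" "distinct (x # A)" "y \<notin> set (x # A)"
    and Rest: "\<forall>c\<in>set Rest. is_cycle_list c" "mset (map (\<lambda>vs. int (length vs)) Rest) = M'"
      "\<forall>c\<in>set Rest. set c \<inter> set (x # A) = {x} \<and> y \<notin> set c \<and> x \<in> set c"
      "\<forall>i<length Rest. \<forall>j<length Rest. i \<noteq> j \<longrightarrow> set (Rest ! i) \<inter> set (Rest ! j) = {x}"
    using flower_split[OF F assms(3)] by blast
  have "e \<inter> insert y (set A) = {}" if e: "e \<in># sum_list (map cycle_edges Rest)" for e
  proof -
    obtain c where c: "c \<in> set Rest" "e \<subseteq> set c" using in_sum_list_cycle_edges[OF e] by blast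
    have "set c \<inter> insert y (set A) = {}" using Rest(3) A(2) c(1) by auto
    then show ?thesis using c(2) by blast
  qed
  then have H: "\<forall>e\<in>#sum_list (map cycle_edges Rest). e \<inter> insert y (set A) = {}" by blast
  have "length A \<ge> 2" using A(1) assms(3) by linarith
  from packing_leave_split_triangle[OF P[unfolded L] assms(2) this A(2,3) H]
  obtain T C where P': "packing_with_leave lam n M (cycle_edges T + (cycle_edges C + sum_list (map cycle_edges Rest)))"
    and T: "is_cycle_list T" "length T = 3" and C: "is_cycle_list C" "length C = length A" "x \<in> set C"
      "set C \<subseteq> insert y (set (x # A))" .
  have "\<forall>c\<in>set Rest. is_cycle_list c \<and> set c \<inter> set C = {x}" using Rest(1,3) C(3,4) by auto
  then have "leave_is_flower (M' + {#int m - 1#}) (cycle_edges C + sum_list (map cycle_edges Rest))"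
    using is_flower_Cons[OF C(1) _ Rest(4,2)] C(2) A(1) by (simp add: leave_is_flower_def flip: A(1))
  then show ?thesis using packing_with_leave_add_cycle[OF P' T(1) assms(2)] T(2) by auto
qed

end
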